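(* Let $X,h,\Gamma^\pm,\Phi^t_{\mathcal X_h}$ be as below. Let $\mathcal U^\pm=\tilde{\mathcal U}^\pm\times\mathbb R$ be conical neighborhoods of $\Gamma^\pm$ with $\mathcal U^+$ positively invariant and $\mathcal U^-$ negatively invariant under the flow, $\delta>0$, and $k,\mathtt m\in C^\infty(T^*\mathbb T\setminus\{\xi=0\})$ positively homogeneous of degree one with $k=\pm|\xi|$ on $\Gamma^\pm$, $\{h,k\}\ge\delta|\xi|$ on $\mathcal U^+\cup\mathcal U^-$, $\mathtt m=\{h,k\}$ on $\mathcal U^+\cup\mathcal U^-$ and $\mathtt m\ge\frac\delta2|\xi|$ everywhere. For $z\in B(\Gamma^\pm):=T^*\mathbb T\setminus\Gamma^\mp$ (with $\xi\ne0$) define $$\ell^\pm(z):=\lim_{t\to\pm\infty}\Big[k(\Phi^t_{\mathcal X_h}(z))-\int_0^t\mathtt m(\Phi^s_{\mathcal X_h}(z))\,ds\Big].$$ Then (i) $\ell^\pm$ is well defined on $B(\Gamma^\pm)$, smooth, positively homogeneous of degree one, and $\ell^\pm=k$ on $\Gamma^\pm$; (ii) $\{h,\ell^\pm\}(x,\xi)\ge\frac\delta2|\xi|$ for all $(x,\xi)\in B(\Gamma^\pm)$ with $\xi\neq0$.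
   Context: $\mathbb T:=\mathbb R/2\pi\mathbb Z$; $X\in C^\infty(\mathbb T;\mathbb R)$ has at least one zero and no degenerate zero; $h(x,\xi)=\xi X(x)$ on $T^*\mathbb T\simeq\mathbb T\times\mathbb R$, with Hamiltonian vector field $\mathcal X_h=(X(x),-\xi X'(x))$ and complete flow $\Phi^t_{\mathcal X_h}$. $K^+:=\{X=0,X'<0\}$, $K^-:=\{X=0,X'>0\}$, $\Gamma^\pm=K^\pm\times\mathbb R$. Poisson bracket $\{h,f\}:=\partial_\xi h\partial_xf-\partial_xh\partial_\xi f$. Positive homogeneity of degree $\rho$: $f(x,\lambda\xi)=\lambda^\rho f(x,\xi)$ for $\lambda>0$. *)

theory Defs
  imports "HOL-Analysis.Analysis"
begin

text \<open>The circle T = R/2piZ is represented by 2pi-periodic functions on R;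
  the cotangent bundle T*T = T x R by pairs (x, xi) :: real * real,
  with functions 2pi-periodic in x.\<close>

fun C_n_on :: "nat \<Rightarrow> 'a::real_normed_vector set \<Rightarrow> ('a \<Rightarrow> real) \<Rightarrow> bool" where
  "C_n_on 0 S f = continuous_on S f"
| "C_n_on (Suc n) S f =
     (\<exists>D. (\<forall>z\<in>S. (f has_derivative D z) (at z)) \<and> (\<forall>v. C_n_on n S (\<lambda>z. D z v)))"

definition smooth_on :: "'a::real_normed_vector set \<Rightarrow> ('a \<Rightarrow> real) \<Rightarrow> bool" where
  "smooth_on S f \<longleftrightarrow> (\<forall>n. C_n_on n S f)"

definition periodic_x :: "(real \<times> real \<Rightarrow> real) \<Rightarrow> bool" where
  "periodic_x f \<longleftrightarrow> (\<forall>x \<xi>. f (x + 2*pi, \<xi>) = f (x, \<xi>))"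

definition pos_homog :: "real \<Rightarrow> (real \<times> real) set \<Rightarrow> (real \<times> real \<Rightarrow> real) \<Rightarrow> bool" where
  "pos_homog \<rho> S f \<longleftrightarrow>
     (\<forall>x \<xi> c. (x, \<xi>) \<in> S \<longrightarrow> c > 0 \<longrightarrow> f (x, c * \<xi>) = c powr \<rho> * f (x, \<xi>))"

definition poisson :: "(real \<times> real \<Rightarrow> real) \<Rightarrow> (real \<times> real \<Rightarrow> real) \<Rightarrow> real \<times> real \<Rightarrow> real" where
  "poisson h f z =
     deriv (\<lambda>\<eta>. h (fst z, \<eta>)) (snd z) * deriv (\<lambda>y. f (y, snd z)) (fst z)
   - deriv (\<lambda>y. h (y, snd z)) (fst z) * deriv (\<lambda>\<eta>. f (fst z, \<eta>)) (snd z)"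

definition hamH :: "(real \<Rightarrow> real) \<Rightarrow> real \<times> real \<Rightarrow> real" where
  "hamH X z = snd z * X (fst z)"

definition hamV :: "(real \<Rightarrow> real) \<Rightarrow> real \<times> real \<Rightarrow> real \<times> real" where
  "hamV X z = (X (fst z), - snd z * deriv X (fst z))"

definition is_flow :: "(real \<Rightarrow> real) \<Rightarrow> (real \<Rightarrow> real \<times> real \<Rightarrow> real \<times> real) \<Rightarrow> bool" where
  "is_flow X \<Phi> \<longleftrightarrow> (\<forall>z. \<Phi> 0 z = z \<and>
      (\<forall>t. ((\<lambda>s. \<Phi> s z) has_vector_derivative hamV X (\<Phi> t z)) (at t)))"

definition Kplus :: "(real \<Rightarrow> real) \<Rightarrow> real set" where
  "Kplus X = {x. X x = 0 \<and> deriv X x < 0}"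

definition Kminus :: "(real \<Rightarrow> real) \<Rightarrow> real set" where
  "Kminus X = {x. X x = 0 \<and> deriv X x > 0}"

definition sint :: "(real \<Rightarrow> real) \<Rightarrow> real \<Rightarrow> real" where
  "sint f t = (if 0 \<le> t then integral {0..t} f else - integral {t..0} f)"

definition periodic_set :: "real set \<Rightarrow> bool" where
  "periodic_set A \<longleftrightarrow> (\<forall>x. x \<in> A \<longleftrightarrow> x + 2*pi \<in> A)"

end

theory Submission
  imports Defs
begin

(* Along the Hamiltonian flow the energy xi X(x) is conserved, so over an interval where
   X does not vanish an orbit is the graph xi = E / X(x), and its x-component solves the
   autonomous equation x' = X(x).  Starting outside U+ and off K-, the x-component therefore
   moves monotonically towards the next zero of X in its direction of motion; that zero lies
   in K+, so the orbit enters the positively invariant set U+ after a finite time T and stays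
   there.  On U+ the integrand m equals {h,k}, the derivative of k along the flow, so the
   approximants are constant for t >= T and converge.  Substituting dx = X(x) dt in the
   integral up to time T yields ell+(x,xi) = xi b(x) with an explicit smooth b satisfying the
   transport equation X b' - X' b = m(x, sgn xi), which gives smoothness, homogeneity and
   {h, ell+} = m >= delta |xi| / 2.  On U+ one has ell+ = k.  The function ell- is ell+ for
   the time-reversed data -X, Phi^(-t), -k, negated. *)

section \<open>Smooth functions\<close>

lemma C_n_on_subset: "C_n_on n S f \<Longrightarrow> T \<subseteq> S \<Longrightarrow> C_n_on n T f"
proof (induction n arbitrary: f)
  case 0
  then show ?case by (auto intro: continuous_on_subset)
next
  case (Suc n)
  then obtain D where "\<forall>z\<in>S. (f has_derivative D z) (at z)" "\<forall>v. C_n_on n S (\<lambda>z. D z v)"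
    by auto
  with Suc show ?case by (auto intro!: exI[of _ D])
qed

lemma C_n_on_SucD: "C_n_on (Suc n) S f \<Longrightarrow> C_n_on n S f"
proof (induction n arbitrary: f)
  case 0
  then obtain D where "\<forall>z\<in>S. (f has_derivative D z) (at z)" by auto
  then show ?case
    by (auto intro!: continuous_at_imp_continuous_on has_derivative_continuous)
next
  case (Suc n)
  then obtain D where "\<forall>z\<in>S. (f has_derivative D z) (at z)" "\<forall>v. C_n_on (Suc n) S (\<lambda>z. D z v)"
    by (metis C_n_on.simps(2))
  with Suc show ?case by (auto intro!: exI[of _ D])
qed

lemma C_n_on_const: "C_n_on n S (\<lambda>z. c)"
proof (induction n arbitrary: c)
  case 0
  then show ?case by simp
next
  case (Suc n)
  then show ?case by (auto intro!: exI[of _ "\<lambda>z v. 0"])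
qed

lemma C_n_on_add: "C_n_on n S f \<Longrightarrow> C_n_on n S g \<Longrightarrow> C_n_on n S (\<lambda>z. f z + g z)"
proof (induction n arbitrary: f g)
  case 0
  then show ?case by (auto intro: continuous_intros)
next
  case (Suc n)
  obtain Df where "\<forall>z\<in>S. (f has_derivative Df z) (at z)" "\<forall>v. C_n_on n S (\<lambda>z. Df z v)"
    using Suc.prems by auto
  moreover obtain Dg where "\<forall>z\<in>S. (g has_derivative Dg z) (at z)" "\<forall>v. C_n_on n S (\<lambda>z. Dg z v)"
    using Suc.prems by auto
  ultimately show ?case
    by (auto intro!: exI[of _ "\<lambda>z v. Df z v + Dg z v"] has_derivative_add Suc.IH)
qed

lemma C_n_on_mult: "C_n_on n S f \<Longrightarrow> C_n_on n S g \<Longrightarrow> C_n_on n S (\<lambda>z. f z * g z)"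
proof (induction n arbitrary: f g)
  case 0
  then show ?case by (auto intro: continuous_intros)
next
  case (Suc n)
  obtain Df where "\<forall>z\<in>S. (f has_derivative Df z) (at z)" "\<forall>v. C_n_on n S (\<lambda>z. Df z v)"
    using Suc.prems by auto
  moreover obtain Dg where "\<forall>z\<in>S. (g has_derivative Dg z) (at z)" "\<forall>v. C_n_on n S (\<lambda>z. Dg z v)"
    using Suc.prems by auto
  moreover have "C_n_on n S f" "C_n_on n S g"
    using Suc.prems C_n_on_SucD by blast+
  ultimately show ?case
    by (auto intro!: exI[of _ "\<lambda>z v. f z * Dg z v + Df z v * g z"] has_derivative_mult
        C_n_on_add Suc.IH)
qed

lemma C_n_on_uminus: "C_n_on n S f \<Longrightarrow> C_n_on n S (\<lambda>z. - f z)"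
  using C_n_on_mult[OF C_n_on_const, of n S f "-1"] by simp

lemma C_n_on_diff: "C_n_on n S f \<Longrightarrow> C_n_on n S g \<Longrightarrow> C_n_on n S (\<lambda>z. f z - g z)"
  using C_n_on_add[OF _ C_n_on_uminus, of n S f g] by simp

lemma C_n_on_inverse:
  "C_n_on n S f \<Longrightarrow> \<forall>z\<in>S. f z \<noteq> 0 \<Longrightarrow> C_n_on n S (\<lambda>z. inverse (f z))"
proof (induction n arbitrary: f)
  case 0
  then show ?case by (auto intro!: continuous_intros)
next
  case (Suc n)
  obtain Df where "\<forall>z\<in>S. (f has_derivative Df z) (at z)" "\<forall>v. C_n_on n S (\<lambda>z. Df z v)"
    using Suc.prems by auto
  moreover have "C_n_on n S (\<lambda>z. inverse (f z))"
    using Suc.IH[OF C_n_on_SucD] Suc.prems by blast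
  ultimately show ?case
    using Suc.prems
    by (intro C_n_on.simps(2)[THEN iffD2]
        exI[of _ "\<lambda>z v. - (inverse (f z) * Df z v * inverse (f z))"])
      (auto intro!: has_derivative_inverse C_n_on_uminus C_n_on_mult)
qed

lemma C_n_on_local:
  assumes "\<forall>z\<in>S. \<exists>W g. open W \<and> z \<in> W \<and> W \<subseteq> S \<and> C_n_on n W g \<and> (\<forall>w\<in>W. f w = g w)"
  shows "C_n_on n S f"
  using assms
proof (induction n arbitrary: f)
  case 0
  have "continuous_on S f"
  proof (rule continuous_at_imp_continuous_on, rule ballI)
    fix z assume "z \<in> S"
    obtain W g where W: "open W" "z \<in> W" "continuous_on W g" "\<forall>w\<in>W. f w = g w"
      using bspec[OF 0 \<open>z \<in> S\<close>] by auto
    then have "isCont g z" using continuous_on_eq_continuous_at[of W g] by blast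
    then show "isCont f z"
    proof -
      have "eventually (\<lambda>w. f w = g w) (nhds z)"
        unfolding eventually_nhds using W by blast
      then show ?thesis using \<open>isCont g z\<close> isCont_cong by blast
    qed
  qed
  then show ?case by simp
next
  case (Suc n)
  have ex: "\<exists>D. (f has_derivative D) (at z)" if zS: "z \<in> S" for z
  proof -
    obtain W g where W: "open W" "z \<in> W" "C_n_on (Suc n) W g" "\<forall>w\<in>W. f w = g w"
      using bspec[OF Suc.prems zS] by blast
    then obtain Dg where "(g has_derivative Dg z) (at z)" using W(2) by (auto simp: C_n_on.simps(2))
    then show ?thesis using W has_derivative_transform_within_open[of g "Dg z" z UNIV W f]
      by auto
  qed
  define D where "D z = (SOME D. (f has_derivative D) (at z))" for z
  have D: "(f has_derivative D z) (at z)" if zS: "z \<in> S" for z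
    using someI_ex[OF ex[OF that]] unfolding D_def .
  show ?case
  proof (rule C_n_on.simps(2)[THEN iffD2], rule exI[of _ D], intro conjI ballI allI)
    fix z assume "z \<in> S" then show "(f has_derivative D z) (at z)" by (rule D)
  next
    fix v
    show "C_n_on n S (\<lambda>z. D z v)"
    proof (rule Suc.IH, rule ballI)
      fix z assume "z \<in> S"
      obtain W g where W: "open W" "z \<in> W" "W \<subseteq> S" "C_n_on (Suc n) W g" "\<forall>w\<in>W. f w = g w"
        using bspec[OF Suc.prems \<open>z \<in> S\<close>] by blast
      then obtain Dg where Dg: "\<forall>w\<in>W. (g has_derivative Dg w) (at w)" "C_n_on n W (\<lambda>w. Dg w v)"
        by (auto simp del: C_n_on.simps simp: C_n_on.simps(2))
      have "D w = Dg w" if "w \<in> W" for w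
      proof (rule has_derivative_unique[OF D])
        show "w \<in> S" using that W by auto
        show "(f has_derivative Dg w) (at w)"
          using Dg(1) that W has_derivative_transform_within_open[of g "Dg w" w UNIV W f] by auto
      qed
      then show "\<exists>W g. open W \<and> z \<in> W \<and> W \<subseteq> S \<and> C_n_on n W g \<and> (\<forall>w\<in>W. D w v = g w)"
        using W Dg by (intro exI[of _ W] exI[of _ "\<lambda>w. Dg w v"]) auto
    qed
  qed
qed

lemma C_n_on_compose_Pair_right:
  fixes f :: "'a::real_normed_vector \<times> 'b::real_normed_vector \<Rightarrow> real"
  shows "C_n_on n S f \<Longrightarrow> C_n_on n {y. (y, c) \<in> S} (\<lambda>y. f (y, c))"
proof (induction n arbitrary: f)
  case 0
  then show ?case
    by (auto intro!: continuous_on_compose2[of S f] continuous_intros)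
next
  case (Suc n)
  obtain D where D: "\<forall>z\<in>S. (f has_derivative D z) (at z)" "\<forall>v. C_n_on n S (\<lambda>z. D z v)"
    using Suc.prems by auto
  have "((\<lambda>y. f (y, c)) has_derivative (\<lambda>v. D (y, c) (v, 0))) (at y)" if "(y, c) \<in> S" for y
  proof -
    have "((\<lambda>y. (y, c)) has_derivative (\<lambda>v. (v, 0))) (at y)"
      by (auto intro!: derivative_eq_intros)
    from has_derivative_compose[OF this, of f "D (y, c)"] D that show ?thesis by auto
  qed
  moreover have "C_n_on n {y. (y, c) \<in> S} (\<lambda>y. D (y, c) (v, 0))" for v
    using Suc.IH[of "\<lambda>z. D z (v, 0)"] D by auto
  ultimately show ?case by (auto intro!: exI[of _ "\<lambda>y v. D (y, c) (v, 0)"])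
qed

lemma C_n_on_compose_fst:
  fixes f :: "'a::real_normed_vector \<Rightarrow> real"
  shows "C_n_on n S f \<Longrightarrow> C_n_on n {z :: 'a \<times> 'b::real_normed_vector. fst z \<in> S} (\<lambda>z. f (fst z))"
proof (induction n arbitrary: f)
  case 0
  then show ?case
    by (auto intro!: continuous_on_compose2[of S f] continuous_intros)
next
  case (Suc n)
  obtain D where D: "\<forall>x\<in>S. (f has_derivative D x) (at x)" "\<forall>v. C_n_on n S (\<lambda>x. D x v)"
    using Suc.prems by auto
  have "((\<lambda>z. f (fst z)) has_derivative (\<lambda>v. D (fst z) (fst v))) (at z)"
    if "fst z \<in> S" for z :: "'a \<times> 'b"
  proof -
    have "(fst has_derivative fst) (at z)"
      by (auto intro!: derivative_eq_intros)
    from has_derivative_compose[OF this, of f "D (fst z)"] D that show ?thesis by auto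
  qed
  moreover have "C_n_on n {z :: 'a \<times> 'b. fst z \<in> S} (\<lambda>z. D (fst z) (fst v))" for v :: "'a \<times> 'b"
    using Suc.IH[of "\<lambda>x. D x (fst v)"] D by auto
  ultimately show ?case by (auto intro!: exI[of _ "\<lambda>z v. D (fst z) (fst v)"])
qed

lemma C_n_on_snd: "C_n_on n S (\<lambda>z::'a::real_normed_vector \<times> real. snd z)"
proof (cases n)
  case 0
  then show ?thesis by (auto intro!: continuous_intros)
next
  case (Suc n')
  then show ?thesis
    by (auto intro!: exI[of _ "\<lambda>z v. snd v"] derivative_eq_intros C_n_on_const)
qed

lemma C_n_on_Suc_real_derivD:
  fixes f :: "real \<Rightarrow> real"
  assumes "open S" "C_n_on (Suc n) S f"
  shows "\<forall>x\<in>S. (f has_real_derivative deriv f x) (at x)" "C_n_on n S (deriv f)"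
proof -
  obtain D where D: "\<forall>x\<in>S. (f has_derivative D x) (at x)" "C_n_on n S (\<lambda>x. D x 1)"
    using assms(2) by auto
  have der: "(f has_real_derivative D x 1) (at x)" if "x \<in> S" for x
  proof -
    have "linear (D x)" using D that has_derivative_linear by blast
    then have "D x = (\<lambda>h. D x 1 * h)"
      by (metis linear_cmul mult.commute mult.right_neutral real_scaleR_def)
    then show ?thesis using D that by (simp add: has_field_derivative_def)
  qed
  have eq: "deriv f x = D x 1" if "x \<in> S" for x
    using der[OF that] by (rule DERIV_imp_deriv)
  show "\<forall>x\<in>S. (f has_real_derivative deriv f x) (at x)"
    using der eq by simp
  show "C_n_on n S (deriv f)"
  proof (rule C_n_on_local, intro ballI)
    fix x assume "x \<in> S"
    with assms(1) D(2) eq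
    show "\<exists>W g. open W \<and> x \<in> W \<and> W \<subseteq> S \<and> C_n_on n W g \<and> (\<forall>w\<in>W. deriv f w = g w)"
      by (intro exI[of _ S] exI[of _ "\<lambda>x. D x 1"]) auto
  qed
qed

lemma C_n_on_Suc_real_derivI:
  fixes f :: "real \<Rightarrow> real"
  assumes "\<forall>x\<in>S. (f has_real_derivative f' x) (at x)" "C_n_on n S f'"
  shows "C_n_on (Suc n) S f"
  using assms
  by (auto simp: has_field_derivative_def intro!: exI[of _ "\<lambda>x h. f' x * h"]
      C_n_on_mult C_n_on_const)

lemma smooth_on_subset: "smooth_on S f \<Longrightarrow> T \<subseteq> S \<Longrightarrow> smooth_on T f"
  unfolding smooth_on_def by (blast intro: C_n_on_subset)

lemma smooth_on_const: "smooth_on S (\<lambda>z. c)"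
  unfolding smooth_on_def by (blast intro: C_n_on_const)

lemma smooth_on_mult: "smooth_on S f \<Longrightarrow> smooth_on S g \<Longrightarrow> smooth_on S (\<lambda>z. f z * g z)"
  unfolding smooth_on_def by (blast intro: C_n_on_mult)

lemma smooth_on_uminus: "smooth_on S f \<Longrightarrow> smooth_on S (\<lambda>z. - f z)"
  unfolding smooth_on_def by (blast intro: C_n_on_uminus)

lemma smooth_on_diff: "smooth_on S f \<Longrightarrow> smooth_on S g \<Longrightarrow> smooth_on S (\<lambda>z. f z - g z)"
  unfolding smooth_on_def by (blast intro: C_n_on_diff)

lemma smooth_on_inverse:
  "smooth_on S f \<Longrightarrow> \<forall>z\<in>S. f z \<noteq> 0 \<Longrightarrow> smooth_on S (\<lambda>z. inverse (f z))"
  unfolding smooth_on_def by (blast intro: C_n_on_inverse)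

lemma smooth_on_compose_Pair_right:
  "smooth_on S f \<Longrightarrow> smooth_on {y. (y, c) \<in> S} (\<lambda>y. f (y, c))"
  unfolding smooth_on_def by (blast intro: C_n_on_compose_Pair_right)

lemma smooth_on_compose_fst:
  "smooth_on S f \<Longrightarrow> smooth_on {z. fst z \<in> S} (\<lambda>z. f (fst z))"
  unfolding smooth_on_def by (blast intro: C_n_on_compose_fst)

lemma smooth_on_snd: "smooth_on S snd"
  unfolding smooth_on_def using C_n_on_snd by blast

lemma smooth_on_local:
  assumes "\<forall>z\<in>S. \<exists>W g. open W \<and> z \<in> W \<and> W \<subseteq> S \<and> smooth_on W g \<and> (\<forall>w\<in>W. f w = g w)"
  shows "smooth_on S f"
  unfolding smooth_on_def
proof
  fix n
  show "C_n_on n S f"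
    using assms unfolding smooth_on_def by (intro C_n_on_local) meson
qed

lemma smooth_on_has_derivative:
  "smooth_on S f \<Longrightarrow> z \<in> S \<Longrightarrow> \<exists>D. (f has_derivative D) (at z)"
  unfolding smooth_on_def by (metis C_n_on.simps(2))

lemma smooth_on_real_deriv:
  fixes f :: "real \<Rightarrow> real"
  assumes "open S" "smooth_on S f"
  shows "\<forall>x\<in>S. (f has_real_derivative deriv f x) (at x)" "smooth_on S (deriv f)"
  using C_n_on_Suc_real_derivD[OF assms(1)] assms(2) unfolding smooth_on_def by blast+

lemma smooth_on_antiderivative:
  fixes f :: "real \<Rightarrow> real"
  assumes "\<forall>x\<in>S. (f has_real_derivative f' x) (at x)" "smooth_on S f'"
  shows "smooth_on S f"
  using assms C_n_on_Suc_real_derivI C_n_on_SucD unfolding smooth_on_def by blast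

section \<open>Poisson brackets with \<open>h = \<xi> X(x)\<close>\<close>

lemma has_derivative_partials:
  fixes f :: "real \<times> real \<Rightarrow> real"
  assumes "(f has_derivative D) (at (x, \<xi>))"
  shows "((\<lambda>y. f (y, \<xi>)) has_real_derivative D (1, 0)) (at x)"
    and "((\<lambda>\<eta>. f (x, \<eta>)) has_real_derivative D (0, 1)) (at \<xi>)"
    and "D (a, b) = a * D (1, 0) + b * D (0, 1)"
proof -
  have lin: "linear D" using assms has_derivative_linear by blast
  have sc: "D (a, b) = a * D (1, 0) + b * D (0, 1)" for a b
  proof -
    have "D (a *\<^sub>R (1, 0) + b *\<^sub>R (0, 1)) = a *\<^sub>R D (1, 0) + b *\<^sub>R D (0, 1)"
      by (simp only: linear_add[OF lin] linear_scale[OF lin])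
    then show ?thesis by simp
  qed
  show "D (a, b) = a * D (1, 0) + b * D (0, 1)" by (rule sc)
  have "((\<lambda>y. (y, \<xi>)) has_derivative (\<lambda>h. (h, 0))) (at x)"
    by (auto intro!: derivative_eq_intros)
  from has_derivative_compose[OF this assms]
  have "((\<lambda>y. f (y, \<xi>)) has_derivative (\<lambda>h. D (h, 0))) (at x)" by simp
  moreover have "(\<lambda>h. D (h, 0)) = (\<lambda>h. D (1, 0) * h)"
  proof (rule ext)
    fix h show "D (h, 0) = D (1, 0) * h" using sc[of h 0] by (simp add: mult.commute)
  qed
  ultimately show "((\<lambda>y. f (y, \<xi>)) has_real_derivative D (1, 0)) (at x)"
    by (simp add: has_field_derivative_def)
  have "((\<lambda>\<eta>. (x, \<eta>)) has_derivative (\<lambda>h. (0, h))) (at \<xi>)"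
    by (auto intro!: derivative_eq_intros)
  from has_derivative_compose[OF this assms]
  have "((\<lambda>\<eta>. f (x, \<eta>)) has_derivative (\<lambda>h. D (0, h))) (at \<xi>)" by simp
  moreover have "(\<lambda>h. D (0, h)) = (\<lambda>h. D (0, 1) * h)"
  proof (rule ext)
    fix h show "D (0, h) = D (0, 1) * h" using sc[of 0 h] by (simp add: mult.commute)
  qed
  ultimately show "((\<lambda>\<eta>. f (x, \<eta>)) has_real_derivative D (0, 1)) (at \<xi>)"
    by (simp add: has_field_derivative_def)
qed

lemma poisson_hamH:
  assumes "(X has_real_derivative X') (at x)"
  shows "poisson (hamH X) f (x, \<xi>) =
      X x * deriv (\<lambda>y. f (y, \<xi>)) x - \<xi> * X' * deriv (\<lambda>\<eta>. f (x, \<eta>)) \<xi>"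
proof -
  have "deriv (\<lambda>\<eta>. \<eta> * X x) \<xi> = X x"
    by (rule DERIV_imp_deriv) (auto intro!: derivative_eq_intros)
  moreover have "deriv (\<lambda>y. \<xi> * X y) x = \<xi> * X'"
    by (rule DERIV_imp_deriv) (rule DERIV_cmult[OF assms])
  ultimately show ?thesis by (simp add: poisson_def hamH_def)
qed

lemma poisson_hamH_has_derivative:
  assumes "(X has_real_derivative deriv X x) (at x)" "(f has_derivative D) (at (x, \<xi>))"
  shows "poisson (hamH X) f (x, \<xi>) = D (hamV X (x, \<xi>))"
proof -
  note partials = has_derivative_partials[OF assms(2)]
  have "deriv (\<lambda>y. f (y, \<xi>)) x = D (1, 0)" "deriv (\<lambda>\<eta>. f (x, \<eta>)) \<xi> = D (0, 1)"
    using partials(1,2) by (simp_all only: DERIV_imp_deriv)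
  then show ?thesis
    using poisson_hamH[OF assms(1)] partials(3)[of "X x" "- \<xi> * deriv X x"]
    by (simp add: hamV_def)
qed

lemma poisson_hamH_uminus:
  assumes "(X has_real_derivative X') (at x)"
  shows "poisson (hamH (\<lambda>x. - X x)) f (x, \<xi>) = - poisson (hamH X) f (x, \<xi>)"
  using poisson_hamH[OF assms] poisson_hamH[OF DERIV_minus[OF assms]] by simp

lemma poisson_uminus:
  assumes "(f has_derivative D) (at (x, \<xi>))"
  shows "poisson h (\<lambda>z. - f z) (x, \<xi>) = - poisson h f (x, \<xi>)"
proof -
  note partials = has_derivative_partials[OF assms]
  have "deriv (\<lambda>y. - f (y, \<xi>)) x = - deriv (\<lambda>y. f (y, \<xi>)) x"
    using DERIV_imp_deriv[OF DERIV_minus[OF partials(1)]] DERIV_imp_deriv[OF partials(1)] by simp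
  moreover have "deriv (\<lambda>\<eta>. - f (x, \<eta>)) \<xi> = - deriv (\<lambda>\<eta>. f (x, \<eta>)) \<xi>"
    using DERIV_imp_deriv[OF DERIV_minus[OF partials(2)]] DERIV_imp_deriv[OF partials(2)] by simp
  ultimately show ?thesis by (simp add: poisson_def algebra_simps)
qed

lemma poisson_cong:
  assumes "eventually (\<lambda>w. f w = g w) (nhds z)"
  shows "poisson h f z = poisson h g z"
proof -
  obtain W where W: "open W" "z \<in> W" "\<forall>w\<in>W. f w = g w"
    using assms unfolding eventually_nhds by blast
  have "open ((\<lambda>y. (y, snd z)) -` W)" "open (Pair (fst z) -` W)"
    using W(1) by (auto intro!: open_vimage continuous_intros)
  moreover have "fst z \<in> (\<lambda>y. (y, snd z)) -` W" "snd z \<in> Pair (fst z) -` W"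
    using W(2) by simp_all
  ultimately have "eventually (\<lambda>y. f (y, snd z) = g (y, snd z)) (nhds (fst z))"
    "eventually (\<lambda>\<eta>. f (fst z, \<eta>) = g (fst z, \<eta>)) (nhds (snd z))"
    using W(3) unfolding eventually_nhds by blast+
  then have "deriv (\<lambda>y. f (y, snd z)) (fst z) = deriv (\<lambda>y. g (y, snd z)) (fst z)"
    "deriv (\<lambda>\<eta>. f (fst z, \<eta>)) (snd z) = deriv (\<lambda>\<eta>. g (fst z, \<eta>)) (snd z)"
    by (simp_all add: deriv_cong_ev)
  then show ?thesis
    unfolding poisson_def by simp
qed

lemma poisson_hamH_fibre_linear:
  assumes "(X has_real_derivative X') (at x)" "(b has_real_derivative b') (at x)"
  shows "poisson (hamH X) (\<lambda>z. snd z * b (fst z)) (x, \<xi>) = X x * \<xi> * b' - \<xi> * X' * b x"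
proof -
  have "deriv (\<lambda>y. \<xi> * b y) x = \<xi> * b'"
    by (rule DERIV_imp_deriv) (rule DERIV_cmult[OF assms(2)])
  moreover have "deriv (\<lambda>\<eta>. \<eta> * b x) \<xi> = b x"
    by (rule DERIV_imp_deriv) (auto intro!: derivative_eq_intros)
  ultimately show ?thesis
    using poisson_hamH[OF assms(1)] by simp
qed

lemma pos_homog_fibre_sign:
  assumes "pos_homog 1 {z. snd z \<noteq> 0} f" "\<sigma> = 1 \<or> \<sigma> = -1" "\<sigma> * \<eta> > 0"
  shows "f (w, \<eta>) = \<sigma> * \<eta> * f (w, \<sigma>)"
proof -
  have "\<sigma> \<noteq> 0" using assms(2) by auto
  then have "f (w, (\<sigma> * \<eta>) * \<sigma>) = (\<sigma> * \<eta>) * f (w, \<sigma>)"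
    using assms(1,3) unfolding pos_homog_def by simp
  moreover have "(\<sigma> * \<eta>) * \<sigma> = \<eta>" using assms(2) by auto
  ultimately show ?thesis by simp
qed

lemma pos_homog_along_orbit:
  assumes "pos_homog 1 {z. snd z \<noteq> 0} f" "\<sigma> = 1 \<or> \<sigma> = -1" "\<sigma> * \<xi> > 0" "X w * X x > 0"
  shows "f (w, \<xi> * X x / X w) = \<sigma> * \<xi> * X x / X w * f (w, \<sigma>)"
proof -
  have "X x / X w > 0" using assms(4) by (auto simp: zero_less_mult_iff zero_less_divide_iff)
  then have "\<sigma> * (\<xi> * X x / X w) > 0" using assms(3) by (metis mult_pos_pos times_divide_eq_right mult.assoc)
  from pos_homog_fibre_sign[OF assms(1,2) this] show ?thesis by (simp add: mult.assoc)
qed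

lemma sgn_real_cases: "(\<xi>::real) \<noteq> 0 \<Longrightarrow> (sgn \<xi> = 1 \<or> sgn \<xi> = -1) \<and> sgn \<xi> * \<xi> > 0"
  by (auto simp: sgn_if)

section \<open>One-dimensional dynamics\<close>

lemma first_zero_after:
  fixes f :: "real \<Rightarrow> real"
  assumes "continuous_on {a..b} f" "f a > 0" "f b = 0" "a \<le> b"
  shows "\<exists>c\<in>{a<..b}. f c = 0 \<and> (\<forall>y\<in>{a..<c}. f y > 0)"
proof -
  let ?Z = "{y \<in> {a..b}. f y = 0}"
  have "compact ?Z"
    using continuous_closed_preimage_constant[OF assms(1) closed_atLeastAtMost]
    unfolding compact_eq_bounded_closed by (auto intro: bounded_subset[of "{a..b}"])
  moreover have "b \<in> ?Z" using assms by simp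
  ultimately obtain c where c: "c \<in> ?Z" "\<forall>y\<in>?Z. c \<le> y"
    using compact_attains_inf[of ?Z] by blast
  have pos: "f y > 0" if y: "y \<in> {a..<c}" for y
  proof (rule ccontr)
    assume "\<not> f y > 0"
    moreover have "continuous_on {a..y} f"
      by (rule continuous_on_subset[OF assms(1)]) (use y c in auto)
    ultimately obtain x where x: "a \<le> x" "x \<le> y" "f x = 0"
      using IVT2'[of f y 0 a] y assms(2) by auto
    then have "x \<in> ?Z" using y c by simp
    then have "c \<le> x" using c(2) by blast
    with x y show False by simp
  qed
  have "c \<noteq> a" using c(1) assms(2) by auto
  with c(1) pos show ?thesis by auto
qed

lemma deriv_nonpos_at_first_zero:
  fixes f :: "real \<Rightarrow> real"
  assumes "(f has_real_derivative D) (at c)" "f c = 0" "a < c" "\<forall>y\<in>{a<..<c}. f y > 0"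
  shows "D \<le> 0"
proof (rule ccontr)
  assume "\<not> D \<le> 0"
  then obtain d where d: "d > 0" "\<forall>h>0. h < d \<longrightarrow> f (c - h) < f c"
    using DERIV_pos_inc_left[OF assms(1)] by auto
  define h where "h = min d (c - a) / 2"
  have h: "h > 0" "h < d" "h \<le> (c - a) / 2"
    using d assms(3) unfolding h_def by (auto simp: min_def)
  then have "c - h \<in> {a<..<c}" using assms(3) by auto
  with h d assms(2,4) show False by fastforce
qed

lemma Kplus_ahead:
  assumes X_deriv: "\<forall>x. (X has_real_derivative deriv X x) (at x)"
    and nondeg: "\<forall>x. X x = 0 \<longrightarrow> deriv X x \<noteq> 0"
    and "X x0 > 0" "X b = 0" "x0 \<le> b"
  shows "\<exists>c>x0. c \<in> Kplus X \<and> (\<forall>y\<in>{x0..<c}. X y > 0)"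
proof -
  have "continuous_on {x0..b} X"
    using X_deriv by (meson DERIV_isCont continuous_at_imp_continuous_on)
  then obtain c where c: "c \<in> {x0<..b}" "X c = 0" "\<forall>y\<in>{x0..<c}. X y > 0"
    using first_zero_after[of x0 b X] assms by blast
  then have "deriv X c \<le> 0"
    using deriv_nonpos_at_first_zero[OF X_deriv[rule_format, of c], of x0] by auto
  with nondeg c have "c \<in> Kplus X" by (force simp: Kplus_def)
  with c show ?thesis by auto
qed

text \<open>The mirror image \<open>x \<mapsto> - X (- x)\<close> has the same set \<open>Kplus\<close>, reflected.\<close>

lemma Kplus_behind:
  assumes X_deriv: "\<forall>x. (X has_real_derivative deriv X x) (at x)"
    and nondeg: "\<forall>x. X x = 0 \<longrightarrow> deriv X x \<noteq> 0"
    and "X x0 < 0" "X a = 0" "a \<le> x0"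
  shows "\<exists>c<x0. c \<in> Kplus X \<and> (\<forall>y\<in>{c<..x0}. X y < 0)"
proof -
  define Y where "Y = (\<lambda>x. - X (- x))"
  have Y_deriv: "(Y has_real_derivative deriv X (- x)) (at x)" for x
    using DERIV_minus[OF DERIV_chain2[OF X_deriv[rule_format] DERIV_minus[OF DERIV_ident]]]
    by (simp add: Y_def)
  then have deriv_Y: "deriv Y x = deriv X (- x)" for x
    by (rule DERIV_imp_deriv)
  obtain c where c: "c > - x0" "c \<in> Kplus Y" "\<forall>y\<in>{- x0..<c}. Y y > 0"
  proof (rule Kplus_ahead[THEN exE])
    show "\<forall>x. (Y has_real_derivative deriv Y x) (at x)" using Y_deriv by (simp add: deriv_Y)
    show "\<forall>x. Y x = 0 \<longrightarrow> deriv Y x \<noteq> 0" using nondeg unfolding deriv_Y by (simp add: Y_def)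
    show "Y (- x0) > 0" "Y (- a) = 0" "- x0 \<le> - a" using assms(3-5) by (simp_all add: Y_def)
  qed (use that in blast)
  have "\<forall>y\<in>{- c<..x0}. X y < 0"
  proof
    fix y assume "y \<in> {- c<..x0}"
    then have "- y \<in> {- x0..<c}" by auto
    then have "Y (- y) > 0" using c(3) by blast
    then show "X y < 0" by (simp add: Y_def)
  qed
  moreover have "- c \<in> Kplus X"
    using c(2) unfolding Kplus_def mem_Collect_eq deriv_Y by (simp add: Y_def)
  ultimately show ?thesis using c(1) by (intro exI[of _ "- c"]) auto
qed

lemma reaches_level_of_deriv_ge:
  fixes u u' :: "real \<Rightarrow> real"
  assumes u_deriv: "\<forall>t\<ge>0. (u has_real_derivative u' t) (at t)"
    and "\<mu> > 0" and slope: "\<forall>t\<ge>0. u t < y \<longrightarrow> \<mu> \<le> u' t"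
  shows "\<exists>t\<ge>0. y \<le> u t"
proof (rule ccontr)
  assume "\<not> (\<exists>t\<ge>0. y \<le> u t)"
  then have below: "\<forall>t\<ge>0. u t < y" by force
  define t1 where "t1 = (y - u 0) / \<mu> + 1"
  have "(y - u 0) / \<mu> > 0" using below \<open>\<mu> > 0\<close> by simp
  then have t1: "t1 \<ge> 0" by (simp add: t1_def)
  have "u 0 - \<mu> * 0 \<le> u t1 - \<mu> * t1"
  proof (rule DERIV_nonneg_imp_nondecreasing[OF t1])
    fix s assume s: "0 \<le> s" "s \<le> t1"
    have "((\<lambda>t. u t - \<mu> * t) has_real_derivative u' s - \<mu>) (at s)"
      using DERIV_diff[OF u_deriv[rule_format, OF s(1)] DERIV_cmult_Id[of \<mu> s]] by simp
    moreover have "u' s - \<mu> \<ge> 0" using slope below s(1) by simp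
    ultimately show "\<exists>d. ((\<lambda>t. u t - \<mu> * t) has_real_derivative d) (at s) \<and> 0 \<le> d" by blast
  qed
  moreover have "\<mu> * t1 = (y - u 0) + \<mu>" using \<open>\<mu> > 0\<close> by (simp add: t1_def field_simps)
  ultimately have "y \<le> u t1" using \<open>\<mu> > 0\<close> by simp
  with below t1 show False by force
qed

lemma autonomous_ode_climbs:
  fixes u V :: "real \<Rightarrow> real"
  assumes u_deriv: "\<forall>t. (u has_real_derivative V (u t)) (at t)"
    and V_cont: "continuous_on UNIV V"
    and V_nonzero: "\<forall>t\<ge>0. V (u t) \<noteq> 0"
    and V_pos: "\<forall>w\<in>{u 0..y}. V w > 0"
    and y: "u 0 < y" and b: "y < b" "V b = 0"
  shows "\<exists>T\<ge>0. u T = y \<and> (\<forall>s\<in>{0..T}. u s \<in> {u 0..y}) \<and> (\<forall>s\<ge>T. u s \<in> {y..<b})"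
proof -
  have u_cont: "continuous_on S u" for S
    using u_deriv DERIV_isCont continuous_at_imp_continuous_on by blast
  have Vu_pos: "V (u t) > 0" if t: "t \<ge> 0" for t
  proof (rule ccontr)
    assume "\<not> V (u t) > 0"
    moreover have "V (u 0) > 0" using V_pos y by auto
    moreover have "continuous_on {0..t} (\<lambda>t. V (u t))"
      using continuous_on_compose2[OF V_cont u_cont] by auto
    ultimately obtain s where "0 \<le> s" "s \<le> t" "V (u s) = 0"
      using IVT2'[of "\<lambda>t. V (u t)" t 0 0] t by auto
    with V_nonzero show False by auto
  qed
  have mono: "u s \<le> u t" if "0 \<le> s" "s \<le> t" for s t
    using DERIV_nonneg_imp_nondecreasing[of s t u] u_deriv Vu_pos that
    by (metis less_imp_le order_trans)
  have below_b: "u t < b" if t: "t \<ge> 0" for t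
  proof (rule ccontr)
    assume "\<not> u t < b"
    then obtain s where "0 \<le> s" "s \<le> t" "u s = b"
      using IVT'[of u 0 b t, OF _ _ t u_cont] y b by auto
    with V_nonzero b show False by auto
  qed
  obtain w0 where w0: "w0 \<in> {u 0..y}" "\<forall>w\<in>{u 0..y}. V w0 \<le> V w"
    using continuous_attains_inf[of "{u 0..y}" V] y continuous_on_subset[OF V_cont] by auto
  have "\<exists>t\<ge>0. y \<le> u t"
  proof (rule reaches_level_of_deriv_ge)
    show "\<forall>t\<ge>0. (u has_real_derivative V (u t)) (at t)" using u_deriv by blast
    show "V w0 > 0" using V_pos w0(1) by blast
    show "\<forall>t\<ge>0. u t < y \<longrightarrow> V w0 \<le> V (u t)"
      using w0(2) mono by fastforce
  qed
  then obtain t1 where t1: "t1 \<ge> 0" "y \<le> u t1" by blast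
  obtain T where T: "0 \<le> T" "T \<le> t1" "u T = y"
    using IVT'[of u 0 y t1, OF _ t1(2) t1(1) u_cont] y by auto
  have "\<forall>s\<in>{0..T}. u s \<in> {u 0..y}"
    using mono T by (metis atLeastAtMost_iff order.refl)
  moreover have "\<forall>s\<ge>T. u s \<in> {y..<b}"
    using mono T below_b by (metis atLeastLessThan_iff order_trans)
  ultimately show ?thesis using T by blast
qed

lemma autonomous_ode_descends:
  fixes u V :: "real \<Rightarrow> real"
  assumes u_deriv: "\<forall>t. (u has_real_derivative V (u t)) (at t)"
    and V_cont: "continuous_on UNIV V"
    and V_nonzero: "\<forall>t\<ge>0. V (u t) \<noteq> 0"
    and V_neg: "\<forall>w\<in>{y..u 0}. V w < 0"
    and y: "y < u 0" and a: "a < y" "V a = 0"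
  shows "\<exists>T\<ge>0. u T = y \<and> (\<forall>s\<in>{0..T}. u s \<in> {y..u 0}) \<and> (\<forall>s\<ge>T. u s \<in> {a<..y})"
proof -
  let ?u = "\<lambda>t. - u t" and ?V = "\<lambda>w. - V (- w)"
  have "\<forall>t. (?u has_real_derivative ?V (?u t)) (at t)"
    using u_deriv by (auto intro!: derivative_eq_intros)
  moreover have "continuous_on UNIV ?V"
    by (intro continuous_intros continuous_on_compose2[OF V_cont]) auto
  moreover have "\<forall>w\<in>{?u 0..-y}. ?V w > 0"
  proof
    fix w assume "w \<in> {?u 0..-y}"
    then have "- w \<in> {y..u 0}" by auto
    then show "?V w > 0" using V_neg by auto
  qed
  ultimately obtain T where T: "T \<ge> 0" "?u T = -y" "\<forall>s\<in>{0..T}. ?u s \<in> {?u 0..-y}"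
    "\<forall>s\<ge>T. ?u s \<in> {-y..<-a}"
    using autonomous_ode_climbs[of ?u ?V "-y" "-a"] V_nonzero y a by auto
  have "\<forall>s\<in>{0..T}. u s \<in> {y..u 0}"
  proof
    fix s assume "s \<in> {0..T}"
    then have "- u s \<in> {- u 0..-y}" using T(3) by blast
    then show "u s \<in> {y..u 0}" by auto
  qed
  moreover have "\<forall>s\<ge>T. u s \<in> {a<..y}"
  proof (intro allI impI)
    fix s assume "s \<ge> T"
    then have "- u s \<in> {-y..<-a}" using T(4) by blast
    then show "u s \<in> {a<..y}" by auto
  qed
  ultimately show ?thesis using T by auto
qed

section \<open>The forward escape function\<close>

locale escape_setting =
  fixes X :: "real \<Rightarrow> real" and \<Phi> :: "real \<Rightarrow> real \<times> real \<Rightarrow> real \<times> real"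
    and U :: "real set" and k m :: "real \<times> real \<Rightarrow> real"
  assumes X_smooth: "smooth_on UNIV X"
    and X_periodic: "\<forall>x. X (x + 2*pi) = X x"
    and X_has_zero: "\<exists>x. X x = 0"
    and X_nondegenerate: "\<forall>x. X x = 0 \<longrightarrow> deriv X x \<noteq> 0"
    and flow: "is_flow X \<Phi>"
    and U_open: "open U" and Kplus_subset_U: "Kplus X \<subseteq> U"
    and U_forward_invariant: "\<forall>z t. fst z \<in> U \<longrightarrow> t \<ge> 0 \<longrightarrow> fst (\<Phi> t z) \<in> U"
    and k_smooth: "smooth_on {z. snd z \<noteq> 0} k"
    and k_homog: "pos_homog 1 {z. snd z \<noteq> 0} k"
    and m_smooth: "smooth_on {z. snd z \<noteq> 0} m"
    and m_homog: "pos_homog 1 {z. snd z \<noteq> 0} m"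
    and m_eq_poisson: "\<forall>x \<xi>. x \<in> U \<longrightarrow> \<xi> \<noteq> 0 \<longrightarrow> m (x, \<xi>) = poisson (hamH X) k (x, \<xi>)"
begin

lemma X_deriv: "(X has_real_derivative deriv X x) (at x)"
  using smooth_on_real_deriv(1)[OF open_UNIV X_smooth] by blast

lemma X_continuous: "continuous_on S X"
  using X_deriv by (meson DERIV_isCont continuous_at_imp_continuous_on)

lemma deriv_X_continuous: "continuous_on S (deriv X)"
  using smooth_on_real_deriv(2)[OF open_UNIV X_smooth] continuous_on_subset
  unfolding smooth_on_def by (metis C_n_on.simps(1) subset_UNIV)

lemma flow_0: "\<Phi> 0 z = z"
  using flow unfolding is_flow_def by blast

lemma flow_has_vector_derivative:
  "((\<lambda>s. \<Phi> s z) has_vector_derivative hamV X (\<Phi> t z)) (at t)"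
  using flow unfolding is_flow_def by blast

lemma flow_fst_deriv: "((\<lambda>s. fst (\<Phi> s z)) has_real_derivative X (fst (\<Phi> t z))) (at t)"
  using has_derivative_fst[OF flow_has_vector_derivative[unfolded has_vector_derivative_def]]
  by (simp add: has_real_derivative_iff_has_vector_derivative has_vector_derivative_def hamV_def)

lemma flow_snd_deriv:
  "((\<lambda>s. snd (\<Phi> s z)) has_real_derivative - snd (\<Phi> t z) * deriv X (fst (\<Phi> t z))) (at t)"
  using has_derivative_snd[OF flow_has_vector_derivative[unfolded has_vector_derivative_def]]
  by (simp add: has_real_derivative_iff_has_vector_derivative has_vector_derivative_def hamV_def)

lemma flow_fst_continuous: "continuous_on S (\<lambda>s. fst (\<Phi> s z))"
  using flow_fst_deriv DERIV_isCont continuous_at_imp_continuous_on by blast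

lemma flow_snd_continuous: "continuous_on S (\<lambda>s. snd (\<Phi> s z))"
  using flow_snd_deriv DERIV_isCont continuous_at_imp_continuous_on by blast

lemma flow_continuous: "continuous_on S (\<lambda>s. \<Phi> s z)"
  using continuous_on_Pair[OF flow_fst_continuous[of S z] flow_snd_continuous[of S z]] by simp

lemma hamH_flow_invariant: "hamH X (\<Phi> t z) = hamH X z"
proof -
  have "((\<lambda>s. snd (\<Phi> s z) * X (fst (\<Phi> s z))) has_real_derivative 0) (at s)" for s
    using DERIV_mult[OF flow_snd_deriv[of z s] DERIV_chain2[OF X_deriv flow_fst_deriv[of z s]]]
    by (simp add: algebra_simps)
  then have "snd (\<Phi> t z) * X (fst (\<Phi> t z)) = snd (\<Phi> 0 z) * X (fst (\<Phi> 0 z))"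
    using DERIV_isconst_all by blast
  then show ?thesis by (simp add: hamH_def flow_0)
qed

text \<open>A Gronwall argument: \<open>\<xi>(s)\<^sup>2 e\<^bsup>2Bs\<^esup>\<close> is nondecreasing for a bound \<open>B\<close> of \<open>\<bar>X'\<bar>\<close> along the orbit.\<close>

lemma flow_snd_nonzero:
  assumes "snd z \<noteq> 0" "t \<ge> 0"
  shows "snd (\<Phi> t z) \<noteq> 0"
proof -
  have "compact ((\<lambda>s. deriv X (fst (\<Phi> s z))) ` {0..t})"
    by (intro compact_continuous_image continuous_on_compose2[OF deriv_X_continuous
          flow_fst_continuous]) auto
  then obtain B where B: "\<forall>s\<in>{0..t}. \<bar>deriv X (fst (\<Phi> s z))\<bar> \<le> B"
    by (metis (no_types, lifting) bounded_real compact_imp_bounded image_eqI)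
  define w where "w s = snd (\<Phi> s z) * snd (\<Phi> s z) * exp (2 * B * s)" for s
  have "w 0 \<le> w t"
  proof (rule DERIV_nonneg_imp_nondecreasing[OF assms(2)])
    fix s assume s: "0 \<le> s" "s \<le> t"
    have exp_deriv: "((\<lambda>s. exp (2 * B * s)) has_real_derivative exp (2 * B * s) * (2 * B)) (at s)"
      by (auto intro!: derivative_eq_intros)
    have "(w has_real_derivative
        2 * (snd (\<Phi> s z) * snd (\<Phi> s z)) * exp (2 * B * s) * (B - deriv X (fst (\<Phi> s z)))) (at s)"
      unfolding w_def[abs_def]
      by (rule DERIV_cong[OF DERIV_mult[OF DERIV_mult[OF flow_snd_deriv flow_snd_deriv]
            exp_deriv]]) (simp add: algebra_simps)
    moreover have "B - deriv X (fst (\<Phi> s z)) \<ge> 0" using B s by (auto simp: abs_le_iff)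
    ultimately show "\<exists>y. (w has_real_derivative y) (at s) \<and> 0 \<le> y"
      by (meson exp_ge_zero mult_nonneg_nonneg zero_le_mult_iff zero_le_numeral zero_le_square)
  qed
  moreover have "0 < snd z * snd z"
    using assms(1) not_real_square_gt_zero by blast
  then have "w 0 > 0" by (simp add: w_def flow_0)
  ultimately have "w t > 0" by linarith
  then show ?thesis by (auto simp: w_def)
qed

lemma X_flow_nonzero: "snd z \<noteq> 0 \<Longrightarrow> X (fst z) \<noteq> 0 \<Longrightarrow> X (fst (\<Phi> t z)) \<noteq> 0"
  using hamH_flow_invariant[of t z] by (auto simp: hamH_def)

lemma X_zero_ge: "\<exists>b\<ge>x0. X b = 0"
proof -
  interpret periodic_fun_simple X "2 * pi"
    using X_periodic by unfold_locales simp
  obtain x1 where "X x1 = 0" using X_has_zero by blast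
  define n where "n = \<lceil>(x0 - x1) / (2 * pi)\<rceil>"
  have "(x0 - x1) / (2 * pi) \<le> of_int n"
    unfolding n_def by (rule le_of_int_ceiling)
  then have "x0 - x1 \<le> of_int n * (2 * pi)"
    by (simp add: divide_le_eq pi_gt_zero)
  moreover have "X (x1 + of_int n * (2 * pi)) = 0"
    using plus_of_int \<open>X x1 = 0\<close> by simp
  ultimately show ?thesis by (intro exI[of _ "x1 + of_int n * (2 * pi)"]) auto
qed

lemma X_zero_le: "\<exists>a\<le>x0. X a = 0"
proof -
  interpret periodic_fun_simple X "2 * pi"
    using X_periodic by unfold_locales simp
  obtain x1 where "X x1 = 0" using X_has_zero by blast
  define n where "n = \<lfloor>(x0 - x1) / (2 * pi)\<rfloor>"
  have "of_int n \<le> (x0 - x1) / (2 * pi)"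
    unfolding n_def by (rule of_int_floor_le)
  then have "of_int n * (2 * pi) \<le> x0 - x1"
    by (simp add: le_divide_eq pi_gt_zero)
  moreover have "X (x1 + of_int n * (2 * pi)) = 0"
    using plus_of_int \<open>X x1 = 0\<close> by simp
  ultimately show ?thesis by (intro exI[of _ "x1 + of_int n * (2 * pi)"]) auto
qed

lemma X_nonzero_outside_U:
  assumes "x \<notin> U" "x \<notin> Kminus X"
  shows "X x \<noteq> 0"
proof
  assume "X x = 0"
  with X_nondegenerate have "x \<in> Kplus X \<or> x \<in> Kminus X"
    by (auto simp: Kplus_def Kminus_def neq_iff)
  with assms Kplus_subset_U show False by blast
qed

lemma same_sign_near:
  assumes "X x0 \<noteq> 0"
  obtains r where "r > 0" "\<forall>w. \<bar>w - x0\<bar> < r \<longrightarrow> X w * X x0 > 0"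
proof -
  have "open {w. X w * X x0 > 0}"
    using X_continuous by (intro open_Collect_less continuous_intros) auto
  moreover have "x0 \<in> {w. X w * X x0 > 0}"
    using assms not_real_square_gt_zero by blast
  ultimately obtain r where "r > 0" "ball x0 r \<subseteq> {w. X w * X x0 > 0}"
    using openE by blast
  moreover have "\<bar>w - x0\<bar> < r \<Longrightarrow> w \<in> ball x0 r" for w
    by (simp add: dist_real_def abs_minus_commute)
  ultimately show ?thesis using that by blast
qed

definition enters_U_at :: "real \<Rightarrow> real \<Rightarrow> real \<Rightarrow> bool" where
  "enters_U_at lo hi y \<longleftrightarrow> (\<forall>x\<in>{lo<..<hi}. \<forall>\<xi>. \<xi> \<noteq> 0 \<longrightarrow> (\<exists>T\<ge>0. fst (\<Phi> T (x, \<xi>)) = y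
     \<and> (\<forall>s\<in>{0..T}. fst (\<Phi> s (x, \<xi>)) \<in> {lo..hi}) \<and> (\<forall>s\<ge>T. fst (\<Phi> s (x, \<xi>)) \<in> U)))"

lemma enters_U_at_right:
  assumes "X c = 0" "y < c" "{y..<c} \<subseteq> U" "\<forall>w\<in>{lo..y}. X w > 0"
  shows "enters_U_at lo y y"
  unfolding enters_U_at_def
proof (intro ballI allI impI)
  fix x \<xi> :: real assume x: "x \<in> {lo<..<y}" and "\<xi> \<noteq> 0"
  let ?u = "\<lambda>t. fst (\<Phi> t (x, \<xi>))"
  have "X x > 0" using x assms(4) by simp
  then have "\<forall>t\<ge>0. X (?u t) \<noteq> 0"
    using X_flow_nonzero[of "(x, \<xi>)"] \<open>\<xi> \<noteq> 0\<close> by simp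
  moreover have "\<forall>w\<in>{?u 0..y}. X w > 0" using x assms(4) by (simp add: flow_0)
  moreover have "\<forall>t. (?u has_real_derivative X (?u t)) (at t)"
    using flow_fst_deriv by blast
  moreover have "?u 0 < y" using x by (simp add: flow_0)
  ultimately have "\<exists>T\<ge>0. ?u T = y \<and> (\<forall>s\<in>{0..T}. ?u s \<in> {?u 0..y}) \<and> (\<forall>s\<ge>T. ?u s \<in> {y..<c})"
    using autonomous_ode_climbs[of ?u X y c] X_continuous assms(1,2) by blast
  then obtain T where T: "T \<ge> 0" "?u T = y" "\<forall>s\<in>{0..T}. ?u s \<in> {x..y}"
    "\<forall>s\<ge>T. ?u s \<in> {y..<c}"
    unfolding flow_0 fst_conv by blast
  have "\<forall>s\<in>{0..T}. ?u s \<in> {lo..y}"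
  proof
    fix s assume "s \<in> {0..T}"
    then have "?u s \<in> {x..y}" using T(3) by blast
    with x show "?u s \<in> {lo..y}" by auto
  qed
  moreover have "\<forall>s\<ge>T. ?u s \<in> U" using T(4) assms(3) by blast
  ultimately show "\<exists>T\<ge>0. ?u T = y \<and> (\<forall>s\<in>{0..T}. ?u s \<in> {lo..y}) \<and> (\<forall>s\<ge>T. ?u s \<in> U)"
    using T(1,2) by blast
qed

lemma enters_U_at_left:
  assumes "X a = 0" "a < y" "{a<..y} \<subseteq> U" "\<forall>w\<in>{y..hi}. X w < 0"
  shows "enters_U_at y hi y"
  unfolding enters_U_at_def
proof (intro ballI allI impI)
  fix x \<xi> :: real assume x: "x \<in> {y<..<hi}" and "\<xi> \<noteq> 0"
  let ?u = "\<lambda>t. fst (\<Phi> t (x, \<xi>))"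
  have "X x < 0" using x assms(4) by simp
  then have "\<forall>t\<ge>0. X (?u t) \<noteq> 0"
    using X_flow_nonzero[of "(x, \<xi>)"] \<open>\<xi> \<noteq> 0\<close> by simp
  moreover have "\<forall>w\<in>{y..?u 0}. X w < 0" using x assms(4) by (simp add: flow_0)
  moreover have "\<forall>t. (?u has_real_derivative X (?u t)) (at t)"
    using flow_fst_deriv by blast
  moreover have "y < ?u 0" using x by (simp add: flow_0)
  ultimately have "\<exists>T\<ge>0. ?u T = y \<and> (\<forall>s\<in>{0..T}. ?u s \<in> {y..?u 0}) \<and> (\<forall>s\<ge>T. ?u s \<in> {a<..y})"
    using autonomous_ode_descends[of ?u X y a] X_continuous assms(1,2) by blast
  then obtain T where T: "T \<ge> 0" "?u T = y" "\<forall>s\<in>{0..T}. ?u s \<in> {y..x}"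
    "\<forall>s\<ge>T. ?u s \<in> {a<..y}"
    unfolding flow_0 fst_conv by blast
  have "\<forall>s\<in>{0..T}. ?u s \<in> {y..hi}"
  proof
    fix s assume "s \<in> {0..T}"
    then have "?u s \<in> {y..x}" using T(3) by blast
    with x show "?u s \<in> {y..hi}" by auto
  qed
  moreover have "\<forall>s\<ge>T. ?u s \<in> U" using T(4) assms(3) by blast
  ultimately show "\<exists>T\<ge>0. ?u T = y \<and> (\<forall>s\<in>{0..T}. ?u s \<in> {y..hi}) \<and> (\<forall>s\<ge>T. ?u s \<in> U)"
    using T(1,2) by blast
qed

lemma enters_U_near_right:
  assumes "X x0 > 0" "x0 \<notin> U"
  obtains lo y where "lo < x0" "x0 < y" "\<forall>w\<in>{lo..y}. X w > 0" "enters_U_at lo y y"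
proof -
  obtain b where "b \<ge> x0" "X b = 0" using X_zero_ge by blast
  then obtain c where c: "c > x0" "c \<in> Kplus X" "\<forall>w\<in>{x0..<c}. X w > 0"
    using Kplus_ahead[of X x0 b] X_deriv X_nondegenerate assms(1) by blast
  then obtain \<epsilon> where \<epsilon>: "\<epsilon> > 0" "ball c \<epsilon> \<subseteq> U"
    using U_open Kplus_subset_U openE by blast
  define y where "y = c - \<epsilon> / 2"
  have "{y..<c} \<subseteq> U" using \<epsilon> by (force simp: y_def dist_real_def)
  moreover have "x0 < y"
  proof (rule ccontr)
    assume "\<not> x0 < y"
    then have "x0 \<in> ball c \<epsilon>" using c(1) by (simp add: y_def dist_real_def)
    with \<epsilon> assms(2) show False by blast
  qed
  moreover obtain r where "r > 0" and r_sign: "\<forall>w. \<bar>w - x0\<bar> < r \<longrightarrow> X w * X x0 > 0"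
    using same_sign_near[of x0] assms(1) by auto
  moreover have r: "\<forall>w. \<bar>w - x0\<bar> < r \<longrightarrow> X w > 0"
    using r_sign assms(1) by (simp add: zero_less_mult_iff)
  moreover have "\<forall>w\<in>{x0 - r/2..y}. X w > 0"
  proof
    fix w assume w: "w \<in> {x0 - r/2..y}"
    show "X w > 0"
    proof (cases "w < x0")
      case True
      with w \<open>r > 0\<close> r show ?thesis by auto
    next
      case False
      with w c(3) \<epsilon>(1) show ?thesis by (auto simp: y_def)
    qed
  qed
  moreover have "X c = 0" "y < c" using c(2) \<epsilon>(1) by (auto simp: Kplus_def y_def)
  ultimately show ?thesis
    using that[of "x0 - r/2" y] enters_U_at_right by auto
qed

lemma enters_U_near_left:
  assumes "X x0 < 0" "x0 \<notin> U"
  obtains y hi where "y < x0" "x0 < hi" "\<forall>w\<in>{y..hi}. X w < 0" "enters_U_at y hi y"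
proof -
  obtain a where "a \<le> x0" "X a = 0" using X_zero_le by blast
  then obtain c where c: "c < x0" "c \<in> Kplus X" "\<forall>w\<in>{c<..x0}. X w < 0"
    using Kplus_behind[of X x0 a] X_deriv X_nondegenerate assms(1) by blast
  then obtain \<epsilon> where \<epsilon>: "\<epsilon> > 0" "ball c \<epsilon> \<subseteq> U"
    using U_open Kplus_subset_U openE by blast
  define y where "y = c + \<epsilon> / 2"
  have "{c<..y} \<subseteq> U" using \<epsilon> by (force simp: y_def dist_real_def)
  moreover have "y < x0"
  proof (rule ccontr)
    assume "\<not> y < x0"
    then have "x0 \<in> ball c \<epsilon>" using c(1) by (simp add: y_def dist_real_def)
    with \<epsilon> assms(2) show False by blast
  qed
  moreover obtain r where "r > 0" and r_sign: "\<forall>w. \<bar>w - x0\<bar> < r \<longrightarrow> X w * X x0 > 0"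
    using same_sign_near[of x0] assms(1) by auto
  moreover have r: "\<forall>w. \<bar>w - x0\<bar> < r \<longrightarrow> X w < 0"
    using r_sign assms(1) by (simp add: zero_less_mult_iff)
  moreover have "\<forall>w\<in>{y..x0 + r/2}. X w < 0"
  proof
    fix w assume w: "w \<in> {y..x0 + r/2}"
    show "X w < 0"
    proof (cases "w > x0")
      case True
      with w \<open>r > 0\<close> r show ?thesis by auto
    next
      case False
      with w c(3) \<epsilon>(1) show ?thesis by (auto simp: y_def)
    qed
  qed
  moreover have "X c = 0" "c < y" using c(2) \<epsilon>(1) by (auto simp: Kplus_def y_def)
  ultimately show ?thesis
    using that[of y "x0 + r/2"] enters_U_at_left by auto
qed

lemma enters_U_near:
  assumes "x0 \<notin> U" "x0 \<notin> Kminus X"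
  obtains lo hi y where "lo < x0" "x0 < hi"
    "\<forall>w\<in>{lo..hi}. \<forall>w'\<in>{lo..hi}. X w * X w' > 0" "enters_U_at lo hi y"
proof (cases "X x0 > 0")
  case True
  then obtain lo y where "lo < x0" "x0 < y" "\<forall>w\<in>{lo..y}. X w > 0" "enters_U_at lo y y"
    using enters_U_near_right assms(1) by blast
  then show ?thesis using that[of lo y y] by auto
next
  case False
  then have "X x0 < 0" using X_nonzero_outside_U[OF assms] by linarith
  then obtain y hi where "y < x0" "x0 < hi" "\<forall>w\<in>{y..hi}. X w < 0" "enters_U_at y hi y"
    using enters_U_near_left assms(1) by blast
  then show ?thesis using that[of y hi y] by (auto intro: mult_neg_neg)
qed

definition ell_approx :: "real \<times> real \<Rightarrow> real \<Rightarrow> real" where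
  "ell_approx z t = k (\<Phi> t z) - sint (\<lambda>s. m (\<Phi> s z)) t"

lemma ell_approx_0: "ell_approx z 0 = k z"
  by (simp add: ell_approx_def sint_def flow_0)

lemma k_flow_deriv:
  assumes "snd (\<Phi> s z) \<noteq> 0"
  shows "((\<lambda>s. k (\<Phi> s z)) has_real_derivative poisson (hamH X) k (\<Phi> s z)) (at s)"
proof -
  obtain D where D: "(k has_derivative D) (at (\<Phi> s z))"
    using smooth_on_has_derivative[OF k_smooth] assms by blast
  have "((\<lambda>s. k (\<Phi> s z)) has_derivative (\<lambda>h. D (h *\<^sub>R hamV X (\<Phi> s z)))) (at s)"
    using has_derivative_compose[OF flow_has_vector_derivative[unfolded has_vector_derivative_def] D] .
  moreover have "D (hamV X (\<Phi> s z)) = poisson (hamH X) k (\<Phi> s z)"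
    using poisson_hamH_has_derivative[OF X_deriv, of k D "fst (\<Phi> s z)" "snd (\<Phi> s z)"] D by simp
  then have "(\<lambda>h. D (h *\<^sub>R hamV X (\<Phi> s z))) = (*) (poisson (hamH X) k (\<Phi> s z))"
    using linear_scale[OF has_derivative_linear[OF D]] by (simp add: fun_eq_iff mult.commute)
  ultimately show ?thesis by (simp add: has_field_derivative_def)
qed

lemma m_flow_continuous:
  assumes "snd z \<noteq> 0" "0 \<le> a"
  shows "continuous_on {a..b} (\<lambda>s. m (\<Phi> s z))"
proof (rule continuous_on_compose2[OF _ flow_continuous])
  show "continuous_on {z. snd z \<noteq> 0} m"
    using m_smooth unfolding smooth_on_def by (metis C_n_on.simps(1))
  show "(\<lambda>s. \<Phi> s z) ` {a..b} \<subseteq> {z. snd z \<noteq> 0}"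
    using flow_snd_nonzero[OF assms(1)] assms(2) by auto
qed

text \<open>Over \<open>U\<close> the integrand \<open>m\<close> equals \<open>{h, k}\<close>, the derivative of \<open>k\<close> along the flow.\<close>

lemma ell_approx_constant_in_U:
  assumes z: "snd z \<noteq> 0" and T: "0 \<le> T" "T \<le> t"
    and in_U: "\<forall>s\<in>{T..t}. fst (\<Phi> s z) \<in> U"
  shows "ell_approx z t = ell_approx z T"
proof -
  let ?g = "\<lambda>s. m (\<Phi> s z)"
  have "?g integrable_on {0..t}"
    using m_flow_continuous[OF z] by (intro integrable_continuous_real) simp
  then have split: "integral {0..T} ?g + integral {T..t} ?g = integral {0..t} ?g"
    by (rule Henstock_Kurzweil_Integration.integral_combine[OF T])
  have "(?g has_integral (k (\<Phi> t z) - k (\<Phi> T z))) {T..t}"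
  proof (rule fundamental_theorem_of_calculus[OF T(2)])
    fix s assume s: "s \<in> {T..t}"
    have "snd (\<Phi> s z) \<noteq> 0" using flow_snd_nonzero z s T by auto
    moreover have "poisson (hamH X) k (\<Phi> s z) = m (\<Phi> s z)"
      using m_eq_poisson in_U s \<open>snd (\<Phi> s z) \<noteq> 0\<close> by (metis prod.collapse)
    ultimately show "((\<lambda>s. k (\<Phi> s z)) has_vector_derivative ?g s) (at s within {T..t})"
      using k_flow_deriv by (metis has_field_derivative_at_within
          has_real_derivative_iff_has_vector_derivative)
  qed
  then have "integral {T..t} ?g = k (\<Phi> t z) - k (\<Phi> T z)" by (rule integral_unique)
  with split T show ?thesis by (simp add: ell_approx_def sint_def)
qed

lemma ell_approx_tendsto_after_entering_U:
  assumes "snd z \<noteq> 0" "0 \<le> T" "\<forall>s\<ge>T. fst (\<Phi> s z) \<in> U"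
  shows "(ell_approx z \<longlongrightarrow> ell_approx z T) at_top"
proof (rule Lim_transform_eventually[OF tendsto_const])
  show "\<forall>\<^sub>F t in at_top. ell_approx z T = ell_approx z t"
    unfolding eventually_at_top_linorder
    using ell_approx_constant_in_U[OF assms(1,2)] assms(3) by (metis atLeastAtMost_iff)
qed

lemma ell_approx_tendsto_k:
  assumes "snd z \<noteq> 0" "fst z \<in> U"
  shows "(ell_approx z \<longlongrightarrow> k z) at_top"
  using ell_approx_tendsto_after_entering_U[OF assms(1) order.refl] U_forward_invariant assms(2)
  by (simp add: ell_approx_0)

lemma has_integral_along_orbit:
  assumes "T \<ge> 0" and orbit: "\<forall>s\<in>{0..T}. fst (\<Phi> s z) \<in> S"
    and G_deriv: "\<forall>w\<in>S. (G has_real_derivative g w) (at w within S)"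
  shows "((\<lambda>s. X (fst (\<Phi> s z)) * g (fst (\<Phi> s z))) has_integral G (fst (\<Phi> T z)) - G (fst z)) {0..T}"
proof -
  let ?x = "\<lambda>s. fst (\<Phi> s z)"
  have "((\<lambda>s. G (?x s)) has_vector_derivative X (?x s) * g (?x s)) (at s within {0..T})"
    if s: "s \<in> {0..T}" for s
  proof -
    have "(G has_real_derivative g (?x s)) (at (?x s) within ?x ` {0..T})"
      by (rule has_field_derivative_subset[OF G_deriv[rule_format]]) (use s orbit in auto)
    moreover have "(?x has_real_derivative X (?x s)) (at s within {0..T})"
      using flow_fst_deriv[of z s] by (rule has_field_derivative_at_within)
    ultimately have "((\<lambda>s. G (?x s)) has_real_derivative g (?x s) * X (?x s)) (at s within {0..T})"
      using DERIV_image_chain[of G "g (?x s)" ?x s "{0..T}" "X (?x s)"] by (simp add: o_def)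
    then show ?thesis
      by (simp add: has_real_derivative_iff_has_vector_derivative[symmetric] mult.commute)
  qed
  from fundamental_theorem_of_calculus[OF assms(1) this] show ?thesis
    by (simp only: flow_0)
qed

text \<open>Closed form of the escape function over an interval \<open>[lo, hi]\<close> on which \<open>X \<noteq> 0\<close>:
  for \<open>\<sigma> = sgn \<xi>\<close> and orbits entering \<open>U\<close> at \<open>y\<close>, \<open>\<ell>(x, \<xi>) = \<xi> * profile \<sigma> lo y x\<close>.\<close>

definition orbit_density :: "real \<Rightarrow> real \<Rightarrow> real" where
  "orbit_density \<sigma> w = m (w, \<sigma>) / (X w)\<^sup>2"

definition profile :: "real \<Rightarrow> real \<Rightarrow> real \<Rightarrow> real \<Rightarrow> real" where
  "profile \<sigma> lo y x = \<sigma> * X x * (k (y, \<sigma>) / X y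
     - (integral {lo..y} (orbit_density \<sigma>) - integral {lo..x} (orbit_density \<sigma>)))"

lemma orbit_density_smooth:
  assumes "\<sigma> \<noteq> 0" "\<forall>w\<in>S. X w \<noteq> 0"
  shows "smooth_on S (orbit_density \<sigma>)"
proof -
  have "smooth_on UNIV (\<lambda>w. m (w, \<sigma>))"
    using smooth_on_compose_Pair_right[OF m_smooth, of \<sigma>] assms(1) by simp
  moreover have "smooth_on S (\<lambda>w. inverse (X w * X w))"
    using assms(2) by (intro smooth_on_inverse smooth_on_mult smooth_on_subset[OF X_smooth]) auto
  ultimately have "smooth_on S (\<lambda>w. m (w, \<sigma>) * inverse (X w * X w))"
    using smooth_on_mult smooth_on_subset by blast
  then show ?thesis
    by (simp add: orbit_density_def[abs_def] power2_eq_square divide_inverse)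
qed

lemma orbit_density_integral_deriv:
  assumes "\<sigma> \<noteq> 0" "\<forall>w\<in>{lo..hi}. X w \<noteq> 0" "w \<in> {lo..hi}"
  shows "((\<lambda>w. integral {lo..w} (orbit_density \<sigma>)) has_real_derivative orbit_density \<sigma> w)
    (at w within {lo..hi})"
proof -
  have "continuous_on {lo..hi} (orbit_density \<sigma>)"
    using orbit_density_smooth[OF assms(1,2)] unfolding smooth_on_def by (metis C_n_on.simps(1))
  from integral_has_vector_derivative[OF this assms(3)] show ?thesis
    by (simp add: has_real_derivative_iff_has_vector_derivative)
qed

lemma profile_smooth:
  assumes "\<sigma> \<noteq> 0" "\<forall>w\<in>{lo..hi}. X w \<noteq> 0"
  shows "smooth_on {lo<..<hi} (profile \<sigma> lo y)"
proof -
  have "\<forall>w\<in>{lo<..<hi}.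
      ((\<lambda>w. integral {lo..w} (orbit_density \<sigma>)) has_real_derivative orbit_density \<sigma> w) (at w)"
  proof
    fix w assume "w \<in> {lo<..<hi}"
    then show "((\<lambda>w. integral {lo..w} (orbit_density \<sigma>)) has_real_derivative orbit_density \<sigma> w) (at w)"
      using orbit_density_integral_deriv[OF assms, of w] at_within_Icc_at[of lo w hi] by simp
  qed
  moreover have "smooth_on {lo<..<hi} (orbit_density \<sigma>)"
    using assms by (intro orbit_density_smooth) auto
  ultimately have "smooth_on {lo<..<hi} (\<lambda>w. integral {lo..w} (orbit_density \<sigma>))"
    by (rule smooth_on_antiderivative)
  then show ?thesis
    unfolding profile_def[abs_def]
    by (intro smooth_on_mult smooth_on_diff smooth_on_const smooth_on_subset[OF X_smooth]) auto
qed

lemma profile_transport: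
  assumes \<sigma>: "\<sigma> = 1 \<or> \<sigma> = -1" "\<sigma> * \<xi> > 0"
    and X_ne: "\<forall>w\<in>{lo..hi}. X w \<noteq> 0" and x: "x \<in> {lo<..<hi}"
  shows "X x * (\<xi> * deriv (profile \<sigma> lo y) x) - \<xi> * deriv X x * profile \<sigma> lo y x = m (x, \<xi>)"
proof -
  let ?P = "\<lambda>w. integral {lo..w} (orbit_density \<sigma>)"
  define K where "K = k (y, \<sigma>) / X y - ?P y"
  have profile_eq: "profile \<sigma> lo y = (\<lambda>x. \<sigma> * X x * (K + ?P x))"
    by (simp add: profile_def[abs_def] K_def algebra_simps)
  have "\<sigma> \<noteq> 0" using \<sigma>(1) by auto
  have "(?P has_real_derivative orbit_density \<sigma> x) (at x)"
    using orbit_density_integral_deriv[OF \<open>\<sigma> \<noteq> 0\<close> X_ne, of x] x at_within_Icc_at[of lo x hi]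
    by simp
  then have "(profile \<sigma> lo y has_real_derivative
      \<sigma> * (deriv X x * (K + ?P x) + X x * orbit_density \<sigma> x)) (at x)"
    unfolding profile_eq
    by (rule DERIV_cong[OF DERIV_mult[OF DERIV_cmult[OF X_deriv] DERIV_add[OF DERIV_const]]])
      (simp add: algebra_simps)
  then have "X x * (\<xi> * deriv (profile \<sigma> lo y) x) - \<xi> * deriv X x * profile \<sigma> lo y x
      = \<sigma> * \<xi> * (X x * X x * orbit_density \<sigma> x)"
    by (simp add: DERIV_imp_deriv profile_eq algebra_simps)
  also have "X x * X x * orbit_density \<sigma> x = m (x, \<sigma>)"
    using X_ne x by (simp add: orbit_density_def power2_eq_square)
  also have "\<sigma> * \<xi> * m (x, \<sigma>) = m (x, \<xi>)"
    using pos_homog_fibre_sign[OF m_homog \<sigma>] by simp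
  finally show ?thesis .
qed

lemma flow_on_energy_level:
  assumes "X (fst (\<Phi> s z)) \<noteq> 0"
  shows "\<Phi> s z = (fst (\<Phi> s z), hamH X z / X (fst (\<Phi> s z)))"
  using hamH_flow_invariant[of s z] assms unfolding hamH_def
  by (metis nonzero_eq_divide_eq prod.collapse)

lemma pos_homog_on_orbit:
  assumes "pos_homog 1 {z. snd z \<noteq> 0} f" "\<sigma> = 1 \<or> \<sigma> = -1" "\<sigma> * \<xi> > 0"
    and "X (fst (\<Phi> s (x, \<xi>))) * X x > 0"
  shows "f (\<Phi> s (x, \<xi>)) = \<sigma> * \<xi> * X x / X (fst (\<Phi> s (x, \<xi>))) * f (fst (\<Phi> s (x, \<xi>)), \<sigma>)"
proof -
  define w where "w = fst (\<Phi> s (x, \<xi>))"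
  have "X w \<noteq> 0" using assms(4) by (auto simp: w_def)
  then have "\<Phi> s (x, \<xi>) = (w, hamH X (x, \<xi>) / X w)"
    unfolding w_def by (rule flow_on_energy_level)
  then have "\<Phi> s (x, \<xi>) = (w, \<xi> * X x / X w)" by (simp add: hamH_def)
  with pos_homog_along_orbit[OF assms(1-3), of X w x] assms(4) show ?thesis
    unfolding w_def[symmetric] by simp
qed

text \<open>Over an interval where \<open>X \<noteq> 0\<close>, energy conservation \<open>\<xi> X(x) = const\<close> and the
  substitution \<open>dx = X(x) ds\<close> turn the time integral of \<open>m\<close> into an integral in \<open>x\<close>.\<close>

lemma integral_m_along_orbit:
  assumes \<sigma>: "\<sigma> = 1 \<or> \<sigma> = -1" "\<sigma> * \<xi> > 0" and sign: "\<forall>w\<in>{lo..hi}. X w * X x > 0"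
    and T: "T \<ge> 0" "\<forall>s\<in>{0..T}. fst (\<Phi> s (x, \<xi>)) \<in> {lo..hi}"
  shows "integral {0..T} (\<lambda>s. m (\<Phi> s (x, \<xi>))) = \<sigma> * \<xi> * X x *
    (integral {lo..fst (\<Phi> T (x, \<xi>))} (orbit_density \<sigma>) - integral {lo..x} (orbit_density \<sigma>))"
proof -
  let ?x = "\<lambda>s. fst (\<Phi> s (x, \<xi>))"
  let ?P = "\<lambda>w. integral {lo..w} (orbit_density \<sigma>)"
  have X_ne: "\<forall>w\<in>{lo..hi}. X w \<noteq> 0" using sign by fastforce
  have "\<sigma> \<noteq> 0" using \<sigma>(1) by auto
  have m_on_orbit: "m (\<Phi> s (x, \<xi>)) = X (?x s) * (\<sigma> * \<xi> * X x * orbit_density \<sigma> (?x s))"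
    if "s \<in> {0..T}" for s
  proof -
    have "X (?x s) * X x > 0" using sign T(2) that by blast
    then show ?thesis
      using pos_homog_on_orbit[OF m_homog \<sigma>]
      by (simp add: orbit_density_def power2_eq_square field_simps)
  qed
  have "\<forall>w\<in>{lo..hi}. ((\<lambda>w. \<sigma> * \<xi> * X x * ?P w) has_real_derivative
      \<sigma> * \<xi> * X x * orbit_density \<sigma> w) (at w within {lo..hi})"
    using DERIV_cmult[OF orbit_density_integral_deriv[OF \<open>\<sigma> \<noteq> 0\<close> X_ne]] by blast
  from has_integral_along_orbit[OF T this]
  have "((\<lambda>s. X (?x s) * (\<sigma> * \<xi> * X x * orbit_density \<sigma> (?x s))) has_integral
      \<sigma> * \<xi> * X x * (?P (?x T) - ?P x)) {0..T}"
    by (simp add: right_diff_distrib)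
  then have "((\<lambda>s. m (\<Phi> s (x, \<xi>))) has_integral \<sigma> * \<xi> * X x * (?P (?x T) - ?P x)) {0..T}"
    by (rule has_integral_eq[rotated]) (simp add: m_on_orbit)
  then show ?thesis by (rule integral_unique)
qed

lemma ell_approx_eq_profile:
  assumes \<sigma>: "\<sigma> = 1 \<or> \<sigma> = -1" "\<sigma> * \<xi> > 0"
    and sign: "\<forall>w\<in>{lo..hi}. X w * X x > 0"
    and T: "T \<ge> 0" "\<forall>s\<in>{0..T}. fst (\<Phi> s (x, \<xi>)) \<in> {lo..hi}"
  shows "ell_approx (x, \<xi>) T = \<xi> * profile \<sigma> lo (fst (\<Phi> T (x, \<xi>))) x"
proof -
  let ?y = "fst (\<Phi> T (x, \<xi>))"
  have "X ?y * X x > 0" using sign T by auto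
  then have "k (\<Phi> T (x, \<xi>)) = \<sigma> * \<xi> * X x / X ?y * k (?y, \<sigma>)"
    by (rule pos_homog_on_orbit[OF k_homog \<sigma>])
  with integral_m_along_orbit[OF \<sigma> sign T] T(1) show ?thesis
    by (simp add: ell_approx_def sint_def profile_def right_diff_distrib)
qed

lemma ell_approx_tendsto_profile:
  assumes enters: "enters_U_at lo hi y" and \<sigma>: "\<sigma> = 1 \<or> \<sigma> = -1" "\<sigma> * \<xi> > 0"
    and sign: "\<forall>w\<in>{lo..hi}. \<forall>w'\<in>{lo..hi}. X w * X w' > 0" and x: "x \<in> {lo<..<hi}"
  shows "(ell_approx (x, \<xi>) \<longlongrightarrow> \<xi> * profile \<sigma> lo y x) at_top"
proof -
  have "\<xi> \<noteq> 0" using \<sigma>(2) by auto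
  then obtain T where T: "T \<ge> 0" "fst (\<Phi> T (x, \<xi>)) = y"
    "\<forall>s\<in>{0..T}. fst (\<Phi> s (x, \<xi>)) \<in> {lo..hi}" "\<forall>s\<ge>T. fst (\<Phi> s (x, \<xi>)) \<in> U"
    using enters x unfolding enters_U_at_def by blast
  have "x \<in> {lo..hi}" using x by simp
  then have "\<forall>w\<in>{lo..hi}. X w * X x > 0" using sign by blast
  from ell_approx_eq_profile[OF \<sigma> this T(1,3)]
  have "ell_approx (x, \<xi>) T = \<xi> * profile \<sigma> lo y x" unfolding T(2) .
  with ell_approx_tendsto_after_entering_U[OF _ T(1,4)] \<open>\<xi> \<noteq> 0\<close> show ?thesis by simp
qed

definition basin :: "(real \<times> real) set" where
  "basin = {z. snd z \<noteq> 0 \<and> fst z \<notin> Kminus X}"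

lemma open_Compl_Kminus: "open (- Kminus X)"
proof -
  have "- Kminus X = {x. X x \<noteq> 0} \<union> {x. deriv X x < 0}"
    using X_nondegenerate by (auto simp: Kminus_def neq_iff)
  then show ?thesis
    using X_continuous deriv_X_continuous
    by (auto intro!: open_Un open_Collect_neq open_Collect_less continuous_intros)
qed

definition ell :: "real \<times> real \<Rightarrow> real" where
  "ell z = Lim at_top (ell_approx z)"

lemma ell_eqI: "(ell_approx z \<longlongrightarrow> v) at_top \<Longrightarrow> ell z = v"
  unfolding ell_def by (rule tendsto_Lim) simp

lemma ell_eq_k: "x \<in> U \<Longrightarrow> \<xi> \<noteq> 0 \<Longrightarrow> ell (x, \<xi>) = k (x, \<xi>)"
  using ell_approx_tendsto_k[of "(x, \<xi>)"] ell_eqI by simp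

lemma ell_profile_near:
  assumes "x0 \<notin> U" "x0 \<notin> Kminus X" and \<sigma>: "\<sigma> = 1 \<or> \<sigma> = -1"
  obtains lo hi b where "x0 \<in> {lo<..<hi}" "\<forall>w\<in>{lo<..<hi}. X w \<noteq> 0" "smooth_on {lo<..<hi} b"
    "\<forall>x\<in>{lo<..<hi}. \<forall>\<xi>. \<sigma> * \<xi> > 0 \<longrightarrow> (ell_approx (x, \<xi>) \<longlongrightarrow> \<xi> * b x) at_top"
    "\<forall>x\<in>{lo<..<hi}. \<forall>\<xi>. \<sigma> * \<xi> > 0 \<longrightarrow> X x * (\<xi> * deriv b x) - \<xi> * deriv X x * b x = m (x, \<xi>)"
proof -
  obtain lo hi y where lohi: "lo < x0" "x0 < hi"
    and sign: "\<forall>w\<in>{lo..hi}. \<forall>w'\<in>{lo..hi}. X w * X w' > 0" and enters: "enters_U_at lo hi y"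
    using enters_U_near[OF assms(1,2)] by blast
  have X_ne: "\<forall>w\<in>{lo..hi}. X w \<noteq> 0" using sign by fastforce
  have "\<sigma> \<noteq> 0" using \<sigma> by auto
  show ?thesis
  proof (rule that[of lo hi "profile \<sigma> lo y"])
    show "x0 \<in> {lo<..<hi}" using lohi by simp
    show "\<forall>w\<in>{lo<..<hi}. X w \<noteq> 0" using X_ne by simp
    show "smooth_on {lo<..<hi} (profile \<sigma> lo y)" by (rule profile_smooth[OF \<open>\<sigma> \<noteq> 0\<close> X_ne])
    show "\<forall>x\<in>{lo<..<hi}. \<forall>\<xi>. \<sigma> * \<xi> > 0 \<longrightarrow>
        (ell_approx (x, \<xi>) \<longlongrightarrow> \<xi> * profile \<sigma> lo y x) at_top"
      using ell_approx_tendsto_profile[OF enters \<sigma> _ sign] by blast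
    show "\<forall>x\<in>{lo<..<hi}. \<forall>\<xi>. \<sigma> * \<xi> > 0 \<longrightarrow>
        X x * (\<xi> * deriv (profile \<sigma> lo y) x) - \<xi> * deriv X x * profile \<sigma> lo y x = m (x, \<xi>)"
      using profile_transport[OF \<sigma> _ X_ne] by blast
  qed
qed

lemma ell_approx_tendsto_ell:
  assumes "z \<in> basin"
  shows "(ell_approx z \<longlongrightarrow> ell z) at_top"
proof -
  obtain x \<xi> where z: "z = (x, \<xi>)" "\<xi> \<noteq> 0" "x \<notin> Kminus X"
    using assms unfolding basin_def by (cases z) auto
  show ?thesis
  proof (cases "x \<in> U")
    case True
    then show ?thesis using ell_approx_tendsto_k[of z] ell_eq_k z by simp
  next
    case False
    have \<sigma>: "sgn \<xi> = 1 \<or> sgn \<xi> = -1" "sgn \<xi> * \<xi> > 0" using sgn_real_cases[OF z(2)] by auto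
    obtain lo hi b where "x \<in> {lo<..<hi}"
      and lim: "\<forall>y\<in>{lo<..<hi}. \<forall>\<eta>. sgn \<xi> * \<eta> > 0 \<longrightarrow> (ell_approx (y, \<eta>) \<longlongrightarrow> \<eta> * b y) at_top"
      by (rule ell_profile_near[OF False z(3) \<sigma>(1)])
    then have "(ell_approx z \<longlongrightarrow> \<xi> * b x) at_top"
      using \<sigma>(2) z(1) by blast
    then show ?thesis using ell_eqI by simp
  qed
qed

lemma basin_cases:
  assumes "(x, \<xi>) \<in> basin"
  obtains (in_U) "x \<in> U"
  | (profile) \<sigma> lo hi b where "\<sigma> * \<xi> > 0" "x \<in> {lo<..<hi}" "\<forall>w\<in>{lo<..<hi}. X w \<noteq> 0"
      "smooth_on {lo<..<hi} b" "\<forall>y\<in>{lo<..<hi}. \<forall>\<eta>. \<sigma> * \<eta> > 0 \<longrightarrow> ell (y, \<eta>) = \<eta> * b y"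
      "\<forall>y\<in>{lo<..<hi}. \<forall>\<eta>. \<sigma> * \<eta> > 0 \<longrightarrow> X y * (\<eta> * deriv b y) - \<eta> * deriv X y * b y = m (y, \<eta>)"
proof (cases "x \<in> U")
  case False
  have "\<xi> \<noteq> 0" "x \<notin> Kminus X" using assms by (auto simp: basin_def)
  define \<sigma> where "\<sigma> = sgn \<xi>"
  have \<sigma>: "\<sigma> = 1 \<or> \<sigma> = -1" "\<sigma> * \<xi> > 0"
    using sgn_real_cases[OF \<open>\<xi> \<noteq> 0\<close>] unfolding \<sigma>_def by auto
  obtain lo hi b where near: "x \<in> {lo<..<hi}" "\<forall>w\<in>{lo<..<hi}. X w \<noteq> 0" "smooth_on {lo<..<hi} b"
    and lim: "\<forall>y\<in>{lo<..<hi}. \<forall>\<eta>. \<sigma> * \<eta> > 0 \<longrightarrow> (ell_approx (y, \<eta>) \<longlongrightarrow> \<eta> * b y) at_top"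
    and transport: "\<forall>y\<in>{lo<..<hi}. \<forall>\<eta>. \<sigma> * \<eta> > 0 \<longrightarrow>
      X y * (\<eta> * deriv b y) - \<eta> * deriv X y * b y = m (y, \<eta>)"
    by (rule ell_profile_near[OF False \<open>x \<notin> Kminus X\<close> \<sigma>(1)])
  have ell_eq: "\<forall>y\<in>{lo<..<hi}. \<forall>\<eta>. \<sigma> * \<eta> > 0 \<longrightarrow> ell (y, \<eta>) = \<eta> * b y"
    using lim ell_eqI by blast
  show ?thesis by (rule profile[OF \<sigma>(2) near ell_eq transport])
qed (rule in_U)

lemma ell_smooth: "smooth_on basin ell"
proof (rule smooth_on_local, intro ballI)
  fix z assume "z \<in> basin"
  then obtain x \<xi> where z: "z = (x, \<xi>)" "(x, \<xi>) \<in> basin" by (cases z) auto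
  from z(2) have "\<exists>W g. open W \<and> (x, \<xi>) \<in> W \<and> W \<subseteq> basin \<and> smooth_on W g
    \<and> (\<forall>w\<in>W. ell w = g w)"
  proof (cases rule: basin_cases)
    case in_U
    let ?W = "(U \<inter> - Kminus X) \<times> - {0::real}"
    have "open ?W" by (intro open_Times open_Int U_open open_Compl_Kminus open_Compl closed_singleton)
    moreover have "(x, \<xi>) \<in> ?W" using in_U z(2) unfolding basin_def by simp
    moreover have "?W \<subseteq> basin" unfolding basin_def by auto
    moreover have "smooth_on ?W k" by (rule smooth_on_subset[OF k_smooth]) auto
    moreover have "\<forall>w\<in>?W. ell w = k w"
    proof
      fix w assume "w \<in> ?W"
      then show "ell w = k w" using ell_eq_k[of "fst w" "snd w"] by (simp add: mem_Times_iff)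
    qed
    ultimately show ?thesis by blast
  next
    case (profile \<sigma> lo hi b)
    let ?W = "{lo<..<hi} \<times> {\<eta>. \<sigma> * \<eta> > 0}"
    have "open ?W" by (intro open_Times open_Collect_less continuous_intros)
    moreover have "(x, \<xi>) \<in> ?W" using profile(1,2) by simp
    moreover have "?W \<subseteq> basin" using profile(3) by (auto simp: basin_def Kminus_def)
    moreover have "smooth_on ?W (\<lambda>w. snd w * b (fst w))"
    proof (intro smooth_on_mult smooth_on_snd)
      show "smooth_on ?W (\<lambda>w. b (fst w))"
        by (rule smooth_on_subset[OF smooth_on_compose_fst[OF profile(4)]]) auto
    qed
    moreover have "\<forall>w\<in>?W. ell w = snd w * b (fst w)"
    proof
      fix w assume "w \<in> ?W"
      then have "fst w \<in> {lo<..<hi}" "\<sigma> * snd w > 0" by (auto simp: mem_Times_iff)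
      with profile(5) show "ell w = snd w * b (fst w)" by (cases w) simp
    qed
    ultimately show ?thesis by blast
  qed
  with z(1) show "\<exists>W g. open W \<and> z \<in> W \<and> W \<subseteq> basin \<and> smooth_on W g \<and> (\<forall>w\<in>W. ell w = g w)"
    by simp
qed

lemma ell_pos_homog: "pos_homog 1 basin ell"
  unfolding pos_homog_def
proof (intro allI impI)
  fix x \<xi> c :: real assume z: "(x, \<xi>) \<in> basin" and "c > 0"
  then have "\<xi> \<noteq> 0" by (simp add: basin_def)
  from z show "ell (x, c * \<xi>) = c powr 1 * ell (x, \<xi>)"
  proof (cases rule: basin_cases)
    case in_U
    with \<open>c > 0\<close> \<open>\<xi> \<noteq> 0\<close> show ?thesis
      using k_homog by (simp add: ell_eq_k pos_homog_def)
  next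
    case (profile \<sigma> lo hi b)
    have "\<sigma> * (c * \<xi>) > 0"
      using mult_pos_pos[OF \<open>c > 0\<close> profile(1)] by (simp add: algebra_simps)
    then have "ell (x, c * \<xi>) = c * \<xi> * b x" using profile(2,5) by blast
    moreover have "ell (x, \<xi>) = \<xi> * b x" using profile(1,2,5) by blast
    ultimately show ?thesis using \<open>c > 0\<close> by simp
  qed
qed

lemma poisson_ell:
  assumes "(x, \<xi>) \<in> basin"
  shows "poisson (hamH X) ell (x, \<xi>) = m (x, \<xi>)"
  using assms
proof (cases rule: basin_cases)
  case in_U
  have "\<xi> \<noteq> 0" using assms by (simp add: basin_def)
  have "eventually (\<lambda>w. ell w = k w) (nhds (x, \<xi>))"
    unfolding eventually_nhds
    using in_U \<open>\<xi> \<noteq> 0\<close> ell_eq_k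
    by (intro exI[of _ "U \<times> - {0::real}"]) (simp add: open_Times U_open open_Compl)
  then have "poisson (hamH X) ell (x, \<xi>) = poisson (hamH X) k (x, \<xi>)"
    by (rule poisson_cong)
  with m_eq_poisson in_U \<open>\<xi> \<noteq> 0\<close> show ?thesis by simp
next
  case (profile \<sigma> lo hi b)
  let ?W = "{lo<..<hi} \<times> {\<eta>. \<sigma> * \<eta> > 0}"
  have "open ?W" by (intro open_Times open_Collect_less continuous_intros)
  moreover have "(x, \<xi>) \<in> ?W" using profile(1,2) by simp
  moreover have "\<forall>w\<in>?W. ell w = snd w * b (fst w)" using profile(5) by auto
  ultimately have "eventually (\<lambda>w. ell w = snd w * b (fst w)) (nhds (x, \<xi>))"
    unfolding eventually_nhds by blast
  then have "poisson (hamH X) ell (x, \<xi>) = poisson (hamH X) (\<lambda>w. snd w * b (fst w)) (x, \<xi>)"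
    by (rule poisson_cong)
  also have "\<dots> = X x * \<xi> * deriv b x - \<xi> * deriv X x * b x"
    using smooth_on_real_deriv(1)[OF open_greaterThanLessThan profile(4)] profile(2)
    by (intro poisson_hamH_fibre_linear X_deriv) blast
  also have "\<dots> = X x * (\<xi> * deriv b x) - \<xi> * deriv X x * b x"
    by (simp add: mult.assoc)
  also have "\<dots> = m (x, \<xi>)"
    using profile(1,2,6) by blast
  finally show ?thesis .
qed

lemma forward_escape_function:
  assumes m_ge: "\<forall>x \<xi>. \<xi> \<noteq> 0 \<longrightarrow> m (x, \<xi>) \<ge> \<delta> / 2 * \<bar>\<xi>\<bar>"
  shows "\<exists>ell. (\<forall>z. snd z \<noteq> 0 \<and> fst z \<notin> Kminus X \<longrightarrow>
            ((\<lambda>t. k (\<Phi> t z) - sint (\<lambda>s. m (\<Phi> s z)) t) \<longlongrightarrow> ell z) at_top)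
        \<and> smooth_on {z. snd z \<noteq> 0 \<and> fst z \<notin> Kminus X} ell
        \<and> pos_homog 1 {z. snd z \<noteq> 0 \<and> fst z \<notin> Kminus X} ell
        \<and> (\<forall>x \<xi>. x \<in> Kplus X \<longrightarrow> \<xi> \<noteq> 0 \<longrightarrow> ell (x, \<xi>) = k (x, \<xi>))
        \<and> (\<forall>x \<xi>. \<xi> \<noteq> 0 \<and> x \<notin> Kminus X \<longrightarrow> poisson (hamH X) ell (x, \<xi>) \<ge> \<delta> / 2 * \<bar>\<xi>\<bar>)"
proof (intro exI[of _ ell] conjI allI impI)
  fix z :: "real \<times> real" assume "snd z \<noteq> 0 \<and> fst z \<notin> Kminus X"
  then show "((\<lambda>t. k (\<Phi> t z) - sint (\<lambda>s. m (\<Phi> s z)) t) \<longlongrightarrow> ell z) at_top"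
    using ell_approx_tendsto_ell[of z] unfolding basin_def ell_approx_def[abs_def] by simp
next
  fix x \<xi> :: real assume "\<xi> \<noteq> 0 \<and> x \<notin> Kminus X"
  then show "poisson (hamH X) ell (x, \<xi>) \<ge> \<delta> / 2 * \<bar>\<xi>\<bar>"
    using poisson_ell[of x \<xi>] m_ge by (simp add: basin_def)
qed (use ell_smooth ell_pos_homog ell_eq_k Kplus_subset_U in \<open>auto simp: basin_def\<close>)

end

section \<open>Time reversal\<close>

lemma sint_reflect: "sint (\<lambda>s. g (- s)) t = - sint g (- t)"
proof (cases "t \<ge> 0")
  case True
  have "integral {- 0..- (- t)} (\<lambda>s. g (- s)) = integral {- t..0} g"
    by (rule Henstock_Kurzweil_Integration.integral_reflect_real)
  with True show ?thesis by (cases "t = 0") (auto simp: sint_def)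
next
  case False
  have "integral {- (- t)..- 0} (\<lambda>s. g (- s)) = integral {0..- t} g"
    by (rule Henstock_Kurzweil_Integration.integral_reflect_real)
  with False show ?thesis by (simp add: sint_def)
qed

lemma escape_setting_time_reversed:
  assumes X_smooth: "smooth_on UNIV X" and "\<forall>x. X (x + 2*pi) = X x" "\<exists>x. X x = 0"
    and X_nondegenerate: "\<forall>x. X x = 0 \<longrightarrow> deriv X x \<noteq> 0"
    and flow: "is_flow X \<Phi>" and "open U" and Kminus_subset_U: "Kminus X \<subseteq> U"
    and "\<forall>z t. fst z \<in> U \<longrightarrow> t \<le> 0 \<longrightarrow> fst (\<Phi> t z) \<in> U"
    and k_smooth: "smooth_on {z. snd z \<noteq> 0} k" and "pos_homog 1 {z. snd z \<noteq> 0} k"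
    and "smooth_on {z. snd z \<noteq> 0} m" "pos_homog 1 {z. snd z \<noteq> 0} m"
    and m_eq: "\<forall>x \<xi>. x \<in> U \<longrightarrow> \<xi> \<noteq> 0 \<longrightarrow> m (x, \<xi>) = poisson (hamH X) k (x, \<xi>)"
  shows "escape_setting (\<lambda>x. - X x) (\<lambda>t. \<Phi> (- t)) U (\<lambda>z. - k z) m"
proof
  have X_deriv: "(X has_real_derivative deriv X x) (at x)" for x
    using smooth_on_real_deriv(1)[OF open_UNIV X_smooth] by blast
  have deriv_uminus: "deriv (\<lambda>x. - X x) x = - deriv X x" for x
    by (rule DERIV_imp_deriv[OF DERIV_minus[OF X_deriv]])
  show "Kplus (\<lambda>x. - X x) \<subseteq> U"
    using Kminus_subset_U by (auto simp: Kplus_def Kminus_def deriv_uminus)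
  show "\<forall>x. - X x = 0 \<longrightarrow> deriv (\<lambda>x. - X x) x \<noteq> 0"
    using X_nondegenerate by (simp add: deriv_uminus)
  show "is_flow (\<lambda>x. - X x) (\<lambda>t. \<Phi> (- t))"
    unfolding is_flow_def
  proof (intro allI conjI)
    fix z t
    show "\<Phi> (- 0) z = z" using flow unfolding is_flow_def minus_zero by blast
    have "((\<lambda>s. \<Phi> s z) has_vector_derivative hamV X (\<Phi> (- t) z)) (at (- t))"
      using flow unfolding is_flow_def by blast
    from vector_diff_chain_at[OF has_vector_derivative_minus[OF has_vector_derivative_id] this]
    show "((\<lambda>s. \<Phi> (- s) z) has_vector_derivative hamV (\<lambda>x. - X x) (\<Phi> (- t) z)) (at t)"
      by (simp add: o_def hamV_def deriv_uminus)
  qed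
  show "\<forall>x \<xi>. x \<in> U \<longrightarrow> \<xi> \<noteq> 0 \<longrightarrow> m (x, \<xi>) = poisson (hamH (\<lambda>x. - X x)) (\<lambda>z. - k z) (x, \<xi>)"
  proof (intro allI impI)
    fix x \<xi> :: real assume "x \<in> U" "\<xi> \<noteq> 0"
    then obtain D where "(k has_derivative D) (at (x, \<xi>))"
      using smooth_on_has_derivative[OF k_smooth] by fastforce
    with m_eq \<open>x \<in> U\<close> \<open>\<xi> \<noteq> 0\<close>
    show "m (x, \<xi>) = poisson (hamH (\<lambda>x. - X x)) (\<lambda>z. - k z) (x, \<xi>)"
      by (simp add: poisson_hamH_uminus[OF X_deriv] poisson_uminus)
  qed
qed (use assms in \<open>auto simp: pos_homog_def intro: smooth_on_uminus\<close>)

lemma backward_escape_function: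
  assumes reversed: "escape_setting (\<lambda>x. - X x) (\<lambda>t. \<Phi> (- t)) U (\<lambda>z. - k z) m"
    and m_ge: "\<forall>x \<xi>. \<xi> \<noteq> 0 \<longrightarrow> m (x, \<xi>) \<ge> \<delta> / 2 * \<bar>\<xi>\<bar>"
  shows "\<exists>ell. (\<forall>z. snd z \<noteq> 0 \<and> fst z \<notin> Kplus X \<longrightarrow>
            ((\<lambda>t. k (\<Phi> t z) - sint (\<lambda>s. m (\<Phi> s z)) t) \<longlongrightarrow> ell z) at_bot)
        \<and> smooth_on {z. snd z \<noteq> 0 \<and> fst z \<notin> Kplus X} ell
        \<and> pos_homog 1 {z. snd z \<noteq> 0 \<and> fst z \<notin> Kplus X} ell
        \<and> (\<forall>x \<xi>. x \<in> Kminus X \<longrightarrow> \<xi> \<noteq> 0 \<longrightarrow> ell (x, \<xi>) = k (x, \<xi>))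
        \<and> (\<forall>x \<xi>. \<xi> \<noteq> 0 \<and> x \<notin> Kplus X \<longrightarrow> poisson (hamH X) ell (x, \<xi>) \<ge> \<delta> / 2 * \<bar>\<xi>\<bar>)"
proof -
  interpret rev: escape_setting "\<lambda>x. - X x" "\<lambda>t. \<Phi> (- t)" U "\<lambda>z. - k z" m
    by (fact reversed)
  have X_deriv: "(X has_real_derivative deriv X x) (at x)" for x
    using DERIV_minus[OF rev.X_deriv[of x]] DERIV_imp_deriv by fastforce
  have deriv_uminus: "deriv (\<lambda>x. - X x) x = - deriv X x" for x
    by (rule DERIV_imp_deriv[OF DERIV_minus[OF X_deriv]])
  have Kplus_rev: "Kplus (\<lambda>x. - X x) = Kminus X" and Kminus_rev: "Kminus (\<lambda>x. - X x) = Kplus X"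
    by (auto simp: Kplus_def Kminus_def deriv_uminus)
  have basin_rev: "rev.basin = {z. snd z \<noteq> 0 \<and> fst z \<notin> Kplus X}"
    by (simp add: rev.basin_def Kminus_rev)
  show ?thesis
  proof (intro exI[of _ "\<lambda>z. - rev.ell z"] conjI allI impI)
    fix z :: "real \<times> real" assume "snd z \<noteq> 0 \<and> fst z \<notin> Kplus X"
    then have "(rev.ell_approx z \<longlongrightarrow> rev.ell z) at_top"
      by (intro rev.ell_approx_tendsto_ell) (simp add: basin_rev)
    then have "((\<lambda>t. - rev.ell_approx z t) \<longlongrightarrow> - rev.ell z) at_top"
      by (rule tendsto_minus)
    moreover have "- rev.ell_approx z t = k (\<Phi> (- t) z) - sint (\<lambda>s. m (\<Phi> s z)) (- t)" for t
      using sint_reflect[of "\<lambda>s. m (\<Phi> s z)" t] by (simp add: rev.ell_approx_def)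
    ultimately show "((\<lambda>t. k (\<Phi> t z) - sint (\<lambda>s. m (\<Phi> s z)) t) \<longlongrightarrow> - rev.ell z) at_bot"
      unfolding filterlim_at_bot_mirror by simp
  next
    show "smooth_on {z. snd z \<noteq> 0 \<and> fst z \<notin> Kplus X} (\<lambda>z. - rev.ell z)"
      using smooth_on_uminus[OF rev.ell_smooth] by (simp add: basin_rev)
  next
    show "pos_homog 1 {z. snd z \<noteq> 0 \<and> fst z \<notin> Kplus X} (\<lambda>z. - rev.ell z)"
      using rev.ell_pos_homog by (simp add: basin_rev pos_homog_def)
  next
    fix x \<xi> :: real assume "x \<in> Kminus X" "\<xi> \<noteq> 0"
    then show "- rev.ell (x, \<xi>) = k (x, \<xi>)"
      using rev.ell_eq_k rev.Kplus_subset_U by (simp add: Kplus_rev subset_iff)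
  next
    fix x \<xi> :: real assume "\<xi> \<noteq> 0 \<and> x \<notin> Kplus X"
    then have "(x, \<xi>) \<in> rev.basin" by (simp add: basin_rev)
    moreover obtain D where "(rev.ell has_derivative D) (at (x, \<xi>))"
      using smooth_on_has_derivative[OF rev.ell_smooth] calculation by blast
    ultimately have "poisson (hamH X) (\<lambda>z. - rev.ell z) (x, \<xi>) = m (x, \<xi>)"
      using rev.poisson_ell poisson_uminus poisson_hamH_uminus[OF X_deriv] by simp
    then show "poisson (hamH X) (\<lambda>z. - rev.ell z) (x, \<xi>) \<ge> \<delta> / 2 * \<bar>\<xi>\<bar>"
      using m_ge \<open>\<xi> \<noteq> 0 \<and> x \<notin> Kplus X\<close> by simp
  qed
qed

theorem mainTheorem14:
  fixes X :: "real \<Rightarrow> real"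
    and \<Phi> :: "real \<Rightarrow> real \<times> real \<Rightarrow> real \<times> real"
    and Up Um :: "real set"
    and \<delta> :: real
    and k m :: "real \<times> real \<Rightarrow> real"
  assumes X_smooth: "smooth_on UNIV X"
    and X_per: "\<forall>x. X (x + 2*pi) = X x"
    and X_zero: "\<exists>x. X x = 0"
    and X_nondeg: "\<forall>x. X x = 0 \<longrightarrow> deriv X x \<noteq> 0"
    and flow: "is_flow X \<Phi>"
    and Up_open: "open Up" and Up_per: "periodic_set Up" and Up_nbhd: "Kplus X \<subseteq> Up"
    and Um_open: "open Um" and Um_per: "periodic_set Um" and Um_nbhd: "Kminus X \<subseteq> Um"
    and Up_inv: "\<forall>z t. fst z \<in> Up \<longrightarrow> t \<ge> 0 \<longrightarrow> fst (\<Phi> t z) \<in> Up"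
    and Um_inv: "\<forall>z t. fst z \<in> Um \<longrightarrow> t \<le> 0 \<longrightarrow> fst (\<Phi> t z) \<in> Um"
    and \<delta>_pos: "\<delta> > 0"
    and k_smooth: "smooth_on {z. snd z \<noteq> 0} k" and k_per: "periodic_x k"
    and k_hom: "pos_homog 1 {z. snd z \<noteq> 0} k"
    and m_smooth: "smooth_on {z. snd z \<noteq> 0} m" and m_per: "periodic_x m"
    and m_hom: "pos_homog 1 {z. snd z \<noteq> 0} m"
    and k_Gp: "\<forall>x \<xi>. x \<in> Kplus X \<longrightarrow> \<xi> \<noteq> 0 \<longrightarrow> k (x, \<xi>) = \<bar>\<xi>\<bar>"
    and k_Gm: "\<forall>x \<xi>. x \<in> Kminus X \<longrightarrow> \<xi> \<noteq> 0 \<longrightarrow> k (x, \<xi>) = - \<bar>\<xi>\<bar>"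
    and hk_pos: "\<forall>x \<xi>. x \<in> Up \<union> Um \<longrightarrow> \<xi> \<noteq> 0 \<longrightarrow> poisson (hamH X) k (x, \<xi>) \<ge> \<delta> * \<bar>\<xi>\<bar>"
    and m_eq: "\<forall>x \<xi>. x \<in> Up \<union> Um \<longrightarrow> \<xi> \<noteq> 0 \<longrightarrow> m (x, \<xi>) = poisson (hamH X) k (x, \<xi>)"
    and m_ge: "\<forall>x \<xi>. \<xi> \<noteq> 0 \<longrightarrow> m (x, \<xi>) \<ge> \<delta> / 2 * \<bar>\<xi>\<bar>"
  shows
    "(\<exists>ell. (\<forall>z. snd z \<noteq> 0 \<and> fst z \<notin> Kminus X \<longrightarrow>
            ((\<lambda>t. k (\<Phi> t z) - sint (\<lambda>s. m (\<Phi> s z)) t) \<longlongrightarrow> ell z) at_top)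
        \<and> smooth_on {z. snd z \<noteq> 0 \<and> fst z \<notin> Kminus X} ell
        \<and> pos_homog 1 {z. snd z \<noteq> 0 \<and> fst z \<notin> Kminus X} ell
        \<and> (\<forall>x \<xi>. x \<in> Kplus X \<longrightarrow> \<xi> \<noteq> 0 \<longrightarrow> ell (x, \<xi>) = k (x, \<xi>))
        \<and> (\<forall>x \<xi>. \<xi> \<noteq> 0 \<and> x \<notin> Kminus X \<longrightarrow> poisson (hamH X) ell (x, \<xi>) \<ge> \<delta> / 2 * \<bar>\<xi>\<bar>))
   \<and> (\<exists>ell. (\<forall>z. snd z \<noteq> 0 \<and> fst z \<notin> Kplus X \<longrightarrow>
            ((\<lambda>t. k (\<Phi> t z) - sint (\<lambda>s. m (\<Phi> s z)) t) \<longlongrightarrow> ell z) at_bot)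
        \<and> smooth_on {z. snd z \<noteq> 0 \<and> fst z \<notin> Kplus X} ell
        \<and> pos_homog 1 {z. snd z \<noteq> 0 \<and> fst z \<notin> Kplus X} ell
        \<and> (\<forall>x \<xi>. x \<in> Kminus X \<longrightarrow> \<xi> \<noteq> 0 \<longrightarrow> ell (x, \<xi>) = k (x, \<xi>))
        \<and> (\<forall>x \<xi>. \<xi> \<noteq> 0 \<and> x \<notin> Kplus X \<longrightarrow> poisson (hamH X) ell (x, \<xi>) \<ge> \<delta> / 2 * \<bar>\<xi>\<bar>))"
proof -
  have "escape_setting X \<Phi> Up k m"
    using X_smooth X_per X_zero X_nondeg flow Up_open Up_nbhd Up_inv k_smooth k_hom m_smooth m_hom m_eq
    by unfold_locales auto
  moreover have "escape_setting (\<lambda>x. - X x) (\<lambda>t. \<Phi> (- t)) Um (\<lambda>z. - k z) m"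
    using X_smooth X_per X_zero X_nondeg flow Um_open Um_nbhd Um_inv k_smooth k_hom m_smooth m_hom m_eq
    by (intro escape_setting_time_reversed) auto
  ultimately show ?thesis
    using escape_setting.forward_escape_function backward_escape_function m_ge by blast
qed

end
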